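(* Assume $E$ is countable. For every family $(\gamma_x)_{x\in S}$ where each $\gamma_x$ is a proper oriented kernel on the time box $\{x\}$, there exists a unique POS $\gamma=(\gamma_\Delta)_{\Delta\in\mathcal T_b}$ such that $\gamma_{\{x\}}=\gamma_x$ for all $x\in S$. Moreover $$\mathcal G(\gamma)=\bigl\{\mu\text{ probability measure on }(\Omega,\mathcal F):\ \mu\gamma_x=\mu\text{ on }\mathcal F_{S\setminus x_+}\text{ for all }x\in S\bigr\}.$$
   Context: $(S,\le)$ is a countable partially ordered set. For $x\in S$ write $x_-=\{y\in S:y<x\}$, $x_+=\{y\in S:y>x\}$. For $\Upsilon\subset S$: $\max(\Upsilon)=\{x\in\Upsilon: y\notin\Upsilon\text{ for all }y>x\}$, $\min(\Upsilon)=\{x\in\Upsilon: y\notin\Upsilon\text{ for all }y<x\}$, the past $\Upsilon_-=\{x\in S\setminus\Upsilon:\exists y\in\Upsilon,\ x<y\}$, the future $\Upsilon_+=\{x\in S\setminus\Upsilon:\exists y\in\Upsilon,\ x>y\}$, and the outer time $\Upsilon^*=\{x\in S: x\text{ is comparable with no }y\in\Upsilon\}$. Standing assumptions: for every $x\in S$, $\max(x_-)$ and $\min(x_+)$ are finite, every $y<x$ satisfies $y\le y_0<x$ for some $y_0\in\max(x_-)$, every $z>x$ satisfies $z\ge z_0>x$ for some $z_0\in\min(x_+)$; and $S$ has no minimal element. A finite set $\Lambda\subset S$ is a time box if $\Lambda_-\cap\Lambda_+=\emptyset$; $\mathcal T_b$ denotes the set of time boxes (every singleton is one). $(E,\mathcal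 E)$ is a measurable space (colors), $\Omega=E^S$ with the product $\sigma$-algebra $\mathcal F$; for $\Upsilon\subset S$, $\mathcal F_\Upsilon$ is the $\sigma$-algebra generated by the coordinates in $\Upsilon$. A proper oriented kernel on $\Lambda\in\mathcal T_b$ is a map $\gamma_\Lambda:\mathcal F_{S\setminus\Lambda_+}\times\Omega\to[0,1]$ such that (a) $\gamma_\Lambda(\cdot,\omega)$ is a probability measure for each $\omega$; (b) $\gamma_\Lambda(A,\cdot)$ is $\mathcal F_{\Lambda_-\cup\Lambda^*}$-measurable for each $A\in\mathcal F_{S\setminus\Lambda_+}$; (c) $\gamma_\Lambda(A,\cdot)$ is $\mathcal F_{\Lambda_-}$-measurable for each $A\in\mathcal F_\Lambda$; (d) $\gamma_\Lambda(B,\omega)=\mathbf 1_B(\omega)$ for all $B\in\mathcal F_{\Lambda_-\cup\Lambda^*}$. Write $\gamma_\Lambda(f\mid\omega)=\int f(\xi)\,\gamma_\Lambda(d\xi,\omega)$; compositions: $(\gamma_\Delta\gamma_\Lambda)(f\mid\omega)=\int\gamma_\Lambda(f\mid\sigma)\,\gamma_\Delta(d\sigma,\omega)$ and $(\mu\gamma_\Lambda)(f)=\int\gamma_\Lambda(f\mid\sigma)\,\mu(d\sigma)$. A partially oriented specification (POS) is a family $\gamma=(\gamma_\Lambda)_{\Lambda\in\mathcal T_b}$ of proper oriented kernels with $\gamma_\Delta\gamma_\Lambda=\gamma_\Delta$ on $\mathcal F_{S\setminus\Lambda_+}$ (for all bounded $\mathcal F_{S\setminus\Lambda_+}$-measurable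 $h$ and all $\omega$) whenever $\Lambda\subset\Delta$ are time boxes. A probability measure $\mu$ on $(\Omega,\mathcal F)$ is consistent with $\gamma$ if $\mu\gamma_\Lambda=\mu$ on $\mathcal F_{S\setminus\Lambda_+}$ for all $\Lambda\in\mathcal T_b$; $\mathcal G(\gamma)$ is the set of consistent measures. *)

theory Defs
  imports "HOL-Probability.Probability"
begin

text \<open>The time set S is the type 's (a partial order), the colour space is the
  measurable space ME whose carrier is the whole type 'e, and the configuration
  space Omega = E^S is the type 's => 'e (all functions).\<close>

definition maxs :: "'s::order set \<Rightarrow> 's set" where
  "maxs U = {x \<in> U. \<forall>y. x < y \<longrightarrow> y \<notin> U}"

definition mins :: "'s::order set \<Rightarrow> 's set" where
  "mins U = {x \<in> U. \<forall>y. y < x \<longrightarrow> y \<notin> U}"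

definition past :: "'s::order set \<Rightarrow> 's set" where
  "past U = {x. x \<notin> U \<and> (\<exists>y\<in>U. x < y)}"

definition fut :: "'s::order set \<Rightarrow> 's set" where
  "fut U = {x. x \<notin> U \<and> (\<exists>y\<in>U. y < x)}"

definition outer :: "'s::order set \<Rightarrow> 's set" where
  "outer U = {x. \<forall>y\<in>U. \<not> (x \<le> y \<or> y \<le> x)}"

definition standing :: "'s::order itself \<Rightarrow> bool" where
  "standing _ \<longleftrightarrow>
     (\<forall>x::'s. finite (maxs {y. y < x}) \<and> finite (mins {y. x < y})) \<and>
     (\<forall>x y::'s. y < x \<longrightarrow> (\<exists>y0\<in>maxs {y. y < x}. y \<le> y0)) \<and>
     (\<forall>x z::'s. x < z \<longrightarrow> (\<exists>z0\<in>mins {z. x < z}. z0 \<le> z)) \<and>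
     (\<forall>x::'s. \<exists>y. y < x)"

definition timebox :: "'s::order set \<Rightarrow> bool" where
  "timebox L \<longleftrightarrow> finite L \<and> past L \<inter> fut L = {}"

definition FM :: "'e measure \<Rightarrow> 's set \<Rightarrow> ('s \<Rightarrow> 'e) measure" where
  "FM ME U = sigma UNIV {(\<lambda>\<omega>. \<omega> i) -` A | i A. i \<in> U \<and> A \<in> sets ME}"

definition OmegaM :: "'e measure \<Rightarrow> ('s \<Rightarrow> 'e) measure" where
  "OmegaM ME = PiM UNIV (\<lambda>_. ME)"

text \<open>A proper oriented kernel on L: for each omega a probability measure on
  (Omega, F_{S - L_+}), conditions (a)--(d).\<close>
definition proper_kernel ::
  "'e measure \<Rightarrow> 's::order set \<Rightarrow> (('s \<Rightarrow> 'e) \<Rightarrow> ('s \<Rightarrow> 'e) measure) \<Rightarrow> bool" where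
  "proper_kernel ME L k \<longleftrightarrow>
     (\<forall>\<omega>. prob_space (k \<omega>) \<and> space (k \<omega>) = UNIV \<and> sets (k \<omega>) = sets (FM ME (- fut L))) \<and>
     (\<forall>A \<in> sets (FM ME (- fut L)).
        (\<lambda>\<omega>. measure (k \<omega>) A) \<in> borel_measurable (FM ME (past L \<union> outer L))) \<and>
     (\<forall>A \<in> sets (FM ME L).
        (\<lambda>\<omega>. measure (k \<omega>) A) \<in> borel_measurable (FM ME (past L))) \<and>
     (\<forall>B \<in> sets (FM ME (past L \<union> outer L)). \<forall>\<omega>. measure (k \<omega>) B = indicator B \<omega>)"

text \<open>For time boxes L \<subseteq> D the composition
  gamma_D gamma_L is compared with gamma_D on bounded functions measurable w.r.t.
  F_{S - L_+} which are also measurable w.r.t. the domain F_{S - D_+} of gamma_D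
  (the only functions for which both sides are defined).\<close>
definition POS ::
  "'e measure \<Rightarrow> ('s::order set \<Rightarrow> ('s \<Rightarrow> 'e) \<Rightarrow> ('s \<Rightarrow> 'e) measure) \<Rightarrow> bool" where
  "POS ME \<gamma> \<longleftrightarrow>
     (\<forall>L. timebox L \<longrightarrow> proper_kernel ME L (\<gamma> L)) \<and>
     (\<forall>L D. timebox L \<longrightarrow> timebox D \<longrightarrow> L \<subseteq> D \<longrightarrow>
        (\<forall>h::('s \<Rightarrow> 'e) \<Rightarrow> real.
           h \<in> borel_measurable (FM ME (- (fut L \<union> fut D))) \<longrightarrow> bounded (range h) \<longrightarrow>
           (\<forall>\<omega>. (\<integral>\<sigma>. (\<integral>\<xi>. h \<xi> \<partial>(\<gamma> L \<sigma>)) \<partial>(\<gamma> D \<omega>)) = (\<integral>\<xi>. h \<xi> \<partial>(\<gamma> D \<omega>)))))"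

definition consistent_on ::
  "'e measure \<Rightarrow> ('s \<Rightarrow> 'e) measure \<Rightarrow> 's::order set \<Rightarrow> (('s \<Rightarrow> 'e) \<Rightarrow> ('s \<Rightarrow> 'e) measure) \<Rightarrow> bool" where
  "consistent_on ME \<mu> L k \<longleftrightarrow>
     (\<forall>A \<in> sets (FM ME (- fut L)). (\<integral>\<sigma>. measure (k \<sigma>) A \<partial>\<mu>) = measure \<mu> A)"

definition Gibbs ::
  "'e measure \<Rightarrow> ('s::order set \<Rightarrow> ('s \<Rightarrow> 'e) \<Rightarrow> ('s \<Rightarrow> 'e) measure) \<Rightarrow> ('s \<Rightarrow> 'e) measure set" where
  "Gibbs ME \<gamma> = {\<mu>. prob_space \<mu> \<and> sets \<mu> = sets (OmegaM ME) \<and>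
                    (\<forall>L. timebox L \<longrightarrow> consistent_on ME \<mu> L (\<gamma> L))}"

end

theory Submission
  imports Defs
begin

text \<open>
  Given proper oriented kernels g x on the singletons {x}, the kernel on a time
  box L is built by peeling off a maximal element x of L:
    gamma_L omega = (gamma_{L - {x}} omega) composed with g x,
  i.e. first resample L - {x} and then the site x (the composition kcomp below).
\<close>

definition Gen :: "'e measure \<Rightarrow> 's set \<Rightarrow> ('s \<Rightarrow> 'e) set set" where
  "Gen ME U = {(\<lambda>\<omega>. \<omega> i) -` A | i A. i \<in> U \<and> A \<in> sets ME}"

lemma space_FM [simp]: "space (FM ME U) = UNIV"
  unfolding FM_def by (rule space_measure_of_conv)

lemma sets_FM: "sets (FM ME U) = sigma_sets UNIV (Gen ME U)"
  unfolding FM_def Gen_def by (rule sets_measure_of) auto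

lemma Gen_FM: "Gen ME U \<subseteq> sets (FM ME U)"
  unfolding sets_FM by auto

lemma FM_UNIV [simp]: "UNIV \<in> sets (FM ME U)"
  using sets.top[of "FM ME U"] by simp

lemma FM_mono: "U \<subseteq> V \<Longrightarrow> sets (FM ME U) \<subseteq> sets (FM ME V)"
  unfolding sets_FM by (rule sigma_sets_mono') (auto simp: Gen_def)

lemma measurable_FM_mono:
  "U \<subseteq> V \<Longrightarrow> f \<in> measurable (FM ME U) N \<Longrightarrow> f \<in> measurable (FM ME V) N"
  using FM_mono[of U V ME] unfolding measurable_def by auto

lemma measurable_FM_into:
  "sets (FM ME U) \<subseteq> sets M \<Longrightarrow> space M = UNIV \<Longrightarrow> f \<in> measurable (FM ME U) N \<Longrightarrow> f \<in> measurable M N"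
  unfolding measurable_def by auto

lemma sets_FM_OmegaM:
  assumes "space ME = UNIV"
  shows "sets (FM ME U) \<subseteq> sets (OmegaM ME)"
proof -
  have sp: "space (OmegaM ME) = UNIV" using assms by (simp add: OmegaM_def space_PiM)
  have "Gen ME U \<subseteq> sets (OmegaM ME)"
  proof
    fix X assume "X \<in> Gen ME U"
    then obtain i A where X: "X = (\<lambda>\<omega>. \<omega> i) -` A" "A \<in> sets ME" by (auto simp: Gen_def)
    have "(\<lambda>\<omega>. \<omega> i) \<in> measurable (OmegaM ME) ME" unfolding OmegaM_def by simp
    then have "(\<lambda>\<omega>. \<omega> i) -` A \<inter> space (OmegaM ME) \<in> sets (OmegaM ME)" using X(2) by (rule measurable_sets)
    then show "X \<in> sets (OmegaM ME)" using X sp by (metis inf_top.right_neutral)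
  qed
  then show ?thesis unfolding sets_FM using sets.sigma_sets_subset[of "Gen ME U" "OmegaM ME"] sp by metis
qed

lemma sigma_sets_FM_eqI:
  assumes "Gen ME U \<subseteq> R" "R \<subseteq> sets (FM ME U)"
  shows "sigma_sets UNIV R = sets (FM ME U)"
proof
  show "sigma_sets UNIV R \<subseteq> sets (FM ME U)"
    using assms(2) by (metis sets.sigma_sets_subset space_FM)
  show "sets (FM ME U) \<subseteq> sigma_sets UNIV R"
    unfolding sets_FM using assms(1) by (rule sigma_sets_mono')
qed

definition Rect :: "'e measure \<Rightarrow> 's set \<Rightarrow> 's set \<Rightarrow> ('s \<Rightarrow> 'e) set set" where
  "Rect ME U V = {A \<inter> B | A B. A \<in> sets (FM ME U) \<and> B \<in> sets (FM ME V)}"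

definition Rect3 :: "'e measure \<Rightarrow> 's set \<Rightarrow> 's set \<Rightarrow> 's set \<Rightarrow> ('s \<Rightarrow> 'e) set set" where
  "Rect3 ME U V W =
     {A \<inter> B \<inter> C | A B C. A \<in> sets (FM ME U) \<and> B \<in> sets (FM ME V) \<and> C \<in> sets (FM ME W)}"

lemma Rect_Int_stable: "Int_stable (Rect ME U V)"
  unfolding Int_stable_def Rect_def
proof safe
  fix A B A' B' assume "A \<in> sets (FM ME U)" "B \<in> sets (FM ME V)" "A' \<in> sets (FM ME U)" "B' \<in> sets (FM ME V)"
  then show "\<exists>C D. A \<inter> B \<inter> (A' \<inter> B') = C \<inter> D \<and> C \<in> sets (FM ME U) \<and> D \<in> sets (FM ME V)"
    by (intro exI[of _ "A \<inter> A'"] exI[of _ "B \<inter> B'"]) auto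
qed

lemma Rect3_Int_stable: "Int_stable (Rect3 ME U V W)"
  unfolding Int_stable_def Rect3_def
proof safe
  fix A B C A' B' C' assume "A \<in> sets (FM ME U)" "B \<in> sets (FM ME V)" "C \<in> sets (FM ME W)"
    "A' \<in> sets (FM ME U)" "B' \<in> sets (FM ME V)" "C' \<in> sets (FM ME W)"
  then show "\<exists>A'' B'' C''. A \<inter> B \<inter> C \<inter> (A' \<inter> B' \<inter> C') = A'' \<inter> B'' \<inter> C'' \<and>
      A'' \<in> sets (FM ME U) \<and> B'' \<in> sets (FM ME V) \<and> C'' \<in> sets (FM ME W)"
    by (intro exI[of _ "A \<inter> A'"] exI[of _ "B \<inter> B'"] exI[of _ "C \<inter> C'"]) auto
qed

lemma Rect_gen: "sets (FM ME (U \<union> V)) = sigma_sets UNIV (Rect ME U V)"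
proof (rule sigma_sets_FM_eqI[symmetric])
  show "Gen ME (U \<union> V) \<subseteq> Rect ME U V"
  proof
    fix X assume "X \<in> Gen ME (U \<union> V)"
    then obtain i A where X: "X = (\<lambda>\<omega>. \<omega> i) -` A" "i \<in> U \<union> V" "A \<in> sets ME" by (auto simp: Gen_def)
    have m: "i \<in> Z \<Longrightarrow> X \<in> sets (FM ME Z)" for Z using X Gen_FM[of ME Z] by (auto simp: Gen_def)
    show "X \<in> Rect ME U V"
    proof (cases "i \<in> U")
      case True
      then show ?thesis unfolding Rect_def using m[of U] by (intro CollectI exI[of _ X] exI[of _ UNIV]) auto
    next
      case False
      then show ?thesis unfolding Rect_def using m[of V] X(2) by (intro CollectI exI[of _ X] exI[of _ UNIV]) auto
    qed
  qed
  show "Rect ME U V \<subseteq> sets (FM ME (U \<union> V))"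
    unfolding Rect_def using FM_mono[of U "U \<union> V" ME] FM_mono[of V "U \<union> V" ME] by auto
qed

lemma Rect3_gen: "sets (FM ME (U \<union> V \<union> W)) = sigma_sets UNIV (Rect3 ME U V W)"
proof (rule sigma_sets_FM_eqI[symmetric])
  show "Gen ME (U \<union> V \<union> W) \<subseteq> Rect3 ME U V W"
  proof
    fix X assume "X \<in> Gen ME (U \<union> V \<union> W)"
    then obtain i A where X: "X = (\<lambda>\<omega>. \<omega> i) -` A" "i \<in> U \<union> V \<union> W" "A \<in> sets ME" by (auto simp: Gen_def)
    have m: "i \<in> Z \<Longrightarrow> X \<in> sets (FM ME Z)" for Z using X Gen_FM[of ME Z] by (auto simp: Gen_def)
    consider "i \<in> U" | "i \<in> V" | "i \<in> W" using X(2) by auto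
    then show "X \<in> Rect3 ME U V W"
    proof cases
      case 1 then show ?thesis unfolding Rect3_def using m[of U] by (intro CollectI exI[of _ X] exI[of _ UNIV]) auto
    next
      case 2 then show ?thesis unfolding Rect3_def using m[of V] by (intro CollectI exI[of _ UNIV] exI[of _ X]) auto
    next
      case 3 then show ?thesis unfolding Rect3_def using m[of W]
        by (intro CollectI exI[of _ UNIV] exI[of _ UNIV] exI[of _ X]) auto
    qed
  qed
  show "Rect3 ME U V W \<subseteq> sets (FM ME (U \<union> V \<union> W))"
    unfolding Rect3_def using FM_mono[of U "U \<union> V \<union> W" ME] FM_mono[of V "U \<union> V \<union> W" ME]
      FM_mono[of W "U \<union> V \<union> W" ME] by blast
qed

lemma past_single: "past {x} = {z. z < x}" unfolding past_def by auto

lemma empty_box: "fut {} = {}" "past {} = {}" "outer {} = UNIV"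
  unfolding fut_def past_def outer_def by auto

lemma timebox_single: "timebox {x::'s::order}"
  unfolding timebox_def past_def fut_def by auto

lemma fut_disjoint: "L \<inter> fut L = {}" unfolding fut_def by auto

lemma compl_fut_Diff: "- fut L - L \<subseteq> past L \<union> outer (L::'s::order set)"
  unfolding past_def outer_def fut_def by (auto simp: order.order_iff_strict)

lemma past_outer_timebox: "timebox L \<Longrightarrow> past L \<union> outer L \<subseteq> - fut L"
  unfolding timebox_def fut_def outer_def by (auto simp: order.order_iff_strict)

lemma past_single_fut_timebox: "timebox D \<Longrightarrow> y \<in> D \<Longrightarrow> past {y} \<inter> fut D = {}"
  unfolding timebox_def past_def fut_def by auto

lemma maxsD: "x \<in> maxs L \<Longrightarrow> x \<in> L" "x \<in> maxs L \<Longrightarrow> y \<in> L \<Longrightarrow> \<not> x < y"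
  unfolding maxs_def by auto

lemma maxs_nonempty:
  assumes "finite L" "L \<noteq> {}"
  shows "\<exists>x. x \<in> maxs (L::'s::order set)"
proof -
  have "\<exists>x\<in>L. \<forall>y\<in>L. \<not> x < y"
    using assms
  proof (induction L rule: finite_ne_induct)
    case (singleton x) then show ?case by auto
  next
    case (insert a F)
    then obtain x where x: "x \<in> F" "\<forall>y\<in>F. \<not> x < y" by auto
    show ?case
    proof (cases "x < a")
      case True
      then have "\<forall>y\<in>insert a F. \<not> a < y" using x by (auto dest: less_trans)
      then show ?thesis by auto
    next
      case False then show ?thesis using x by auto
    qed
  qed
  then show ?thesis unfolding maxs_def by auto
qed

definition incomparable :: "'s::order \<Rightarrow> 's \<Rightarrow> bool" where
  "incomparable x y \<longleftrightarrow> \<not> x \<le> y \<and> \<not> y \<le> x"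

lemma incomparable_sym: "incomparable x y \<Longrightarrow> incomparable y x"
  unfolding incomparable_def by auto

context
  fixes L :: "'s::order set" and x :: 's
  assumes tb: "timebox L" and xm: "x \<in> maxs L"
begin

lemma max_in: "x \<in> L" using xm maxsD by auto

lemma max_not_less: "y \<in> L \<Longrightarrow> \<not> x < y" by (rule maxsD(2)[OF xm])

lemma past_fut_disjoint: "past L \<inter> fut L = {}" using tb unfolding timebox_def by auto

lemma fut_Diff_max: "fut (L - {x}) \<subseteq> fut L \<union> {x}" unfolding fut_def by auto

lemma past_Diff_max: "past (L - {x}) \<subseteq> past L" unfolding past_def using max_not_less by auto

lemma fut_single_max: "fut {x} \<subseteq> fut L" unfolding fut_def using max_not_less max_in by auto

lemma timebox_Diff_max: "timebox (L - {x})"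
proof -
  have "x \<notin> past (L - {x})" unfolding past_def using max_not_less by auto
  then have "past (L - {x}) \<inter> fut (L - {x}) = {}"
    using fut_Diff_max past_Diff_max past_fut_disjoint by blast
  then show ?thesis using tb unfolding timebox_def by auto
qed

lemma past_single_fut_Diff_max: "past {x} \<inter> fut (L - {x}) = {}"
proof -
  { fix z assume z: "z < x" "z \<in> fut (L - {x})"
    then obtain y where y: "y \<in> L" "y < z" "z \<notin> L - {x}" unfolding fut_def by auto
    then have "z \<notin> L" using z by auto
    then have "z \<in> past L" "z \<in> fut L" using z y max_in unfolding past_def fut_def by auto
    then have False using past_fut_disjoint by auto }
  then show ?thesis unfolding past_single by auto
qed

text \<open>The coordinates seen by g x inside the domain of the kernel on L are
  visible to a kernel on L - {x} (they lie outside its future).\<close>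
lemma single_domain_in_Diff_max: "past {x} \<union> (- fut L - {x}) \<subseteq> - fut (L - {x})"
  using past_single_fut_Diff_max fut_Diff_max by auto

lemma single_box_in_Diff_max: "past {x} \<union> (L - {x}) \<subseteq> - fut (L - {x})"
  using past_single_fut_Diff_max fut_disjoint[of "L - {x}"] by auto

lemma past_outer_single_max: "past L \<union> outer L \<subseteq> past {x} \<union> outer {x}"
proof
  fix z assume z: "z \<in> past L \<union> outer L"
  show "z \<in> past {x} \<union> outer {x}"
  proof (cases "z \<in> outer L")
    case True then show ?thesis using max_in unfolding outer_def by auto
  next
    case False
    then obtain l where l: "z \<notin> L" "l \<in> L" "z < l" using z unfolding past_def by auto
    have "\<not> x \<le> z" using l max_not_less[of l] by (metis le_less_trans)
    moreover have "z \<noteq> x" using l max_in by auto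
    ultimately show ?thesis unfolding past_def outer_def by auto
  qed
qed

lemma past_outer_Diff_max: "past L \<union> outer L \<subseteq> past (L - {x}) \<union> outer (L - {x})"
proof
  fix z assume z: "z \<in> past L \<union> outer L"
  show "z \<in> past (L - {x}) \<union> outer (L - {x})"
  proof (cases "z \<in> outer L")
    case True then show ?thesis unfolding outer_def by auto
  next
    case False
    then obtain l where l: "z \<notin> L" "l \<in> L" "z < l" using z unfolding past_def by auto
    then have zp: "z \<in> past L" unfolding past_def by auto
    show ?thesis
    proof (cases "\<exists>l'\<in>L - {x}. z < l'")
      case True then show ?thesis using l unfolding past_def by auto
    next
      case nl: False
      have "\<not> (\<exists>l'\<in>L - {x}. l' \<le> z)"
      proof
        assume "\<exists>l'\<in>L - {x}. l' \<le> z"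
        then obtain l' where "l' \<in> L" "l' < z" using l by (auto simp: order.order_iff_strict)
        then have "z \<in> fut L" using l unfolding fut_def by auto
        then show False using zp past_fut_disjoint by auto
      qed
      then show ?thesis using nl unfolding outer_def by (auto simp: order.order_iff_strict)
    qed
  qed
qed

text \<open>Coordinates that the composite kernel on L reads: past and outer time of L.\<close>
lemma composite_dependence_past_outer:
  "past (L - {x}) \<union> ((past {x} \<union> (- fut L - {x})) - (L - {x})) \<subseteq> past L \<union> outer L"
  using past_Diff_max compl_fut_Diff[of L] max_in unfolding past_def by auto

lemma composite_dependence_past:
  "past (L - {x}) \<union> ((past {x} \<union> (L - {x})) - (L - {x})) \<subseteq> past L"
  using past_Diff_max max_in unfolding past_def by auto

lemma compl_fut_Diff_max: "- fut L - {x} \<subseteq> past {x} \<union> outer {x}"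
proof
  fix z assume z: "z \<in> - fut L - {x}"
  have "\<not> x < z"
  proof
    assume "x < z"
    then have "z \<notin> L" using max_not_less by auto
    then have "z \<in> fut L" using \<open>x < z\<close> max_in unfolding fut_def by auto
    then show False using z by auto
  qed
  then show "z \<in> past {x} \<union> outer {x}" using z unfolding past_def outer_def by (auto simp: order.order_iff_strict)
qed

end

text \<open>A probability measure restricted to the coordinates in V.  Kernels are
  restricted before being composed with bind, because the Giry monad needs a
  fixed target sigma-algebra.\<close>
definition restrFM :: "'e measure \<Rightarrow> ('s \<Rightarrow> 'e) measure \<Rightarrow> 's set \<Rightarrow> ('s \<Rightarrow> 'e) measure" where
  "restrFM ME M V = restr_to_subalg M (FM ME V)"

lemma integral_abs_le_prob:
  fixes h :: "'a \<Rightarrow> real"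
  assumes "prob_space M" "\<And>z. \<bar>h z\<bar> \<le> B"
  shows "\<bar>\<integral>z. h z \<partial>M\<bar> \<le> B"
proof -
  interpret prob_space M by fact
  have B0: "0 \<le> B" using assms(2)[of undefined] by auto
  have "\<bar>\<integral>z. h z \<partial>M\<bar> \<le> (\<integral>z. \<bar>h z\<bar> \<partial>M)" by simp
  also have "\<dots> \<le> (\<integral>z. B \<partial>M)"
    by (rule integral_mono_AE') (auto simp: assms B0)
  finally show ?thesis by (simp add: prob_space)
qed

context
  fixes ME :: "'e measure" and L :: "'s::order set" and k
  assumes pk: "proper_kernel ME L k" and tbL: "timebox L"
begin

lemma pk_prob: "prob_space (k \<omega>)" using pk unfolding proper_kernel_def by auto
lemma pk_space: "space (k \<omega>) = UNIV" using pk unfolding proper_kernel_def by auto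
lemma pk_sets: "sets (k \<omega>) = sets (FM ME (- fut L))" using pk unfolding proper_kernel_def by auto

lemma pk_emeasure: "emeasure (k \<omega>) A = ennreal (measure (k \<omega>) A)"
proof -
  interpret prob_space "k \<omega>" by (rule pk_prob)
  show ?thesis by (rule emeasure_eq_measure)
qed

lemma pk_measurable_past_outer:
  "A \<in> sets (FM ME (- fut L)) \<Longrightarrow> (\<lambda>\<omega>. measure (k \<omega>) A) \<in> borel_measurable (FM ME (past L \<union> outer L))"
  using pk unfolding proper_kernel_def by auto

lemma pk_measurable_past:
  "A \<in> sets (FM ME L) \<Longrightarrow> (\<lambda>\<omega>. measure (k \<omega>) A) \<in> borel_measurable (FM ME (past L))"
  using pk unfolding proper_kernel_def by auto

lemma pk_indicator:
  "B \<in> sets (FM ME (past L \<union> outer L)) \<Longrightarrow> measure (k \<omega>) B = indicator B \<omega>"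
  using pk unfolding proper_kernel_def by auto

lemma pk_subalgebra: "V \<subseteq> - fut L \<Longrightarrow> subalgebra (k \<omega>) (FM ME V)"
  unfolding subalgebra_def using pk_space pk_sets FM_mono[of V "- fut L" ME] by auto

lemma restrFM_sets: "V \<subseteq> - fut L \<Longrightarrow> sets (restrFM ME (k \<omega>) V) = sets (FM ME V)"
  unfolding restrFM_def by (rule sets_restr_to_subalg[OF pk_subalgebra])

lemma restrFM_space: "space (restrFM ME (k \<omega>) V) = UNIV"
  unfolding restrFM_def by (simp add: space_restr_to_subalg pk_space)

lemma restrFM_emeasure:
  "V \<subseteq> - fut L \<Longrightarrow> A \<in> sets (FM ME V) \<Longrightarrow> emeasure (restrFM ME (k \<omega>) V) A = emeasure (k \<omega>) A"
  unfolding restrFM_def by (rule emeasure_restr_to_subalg[OF pk_subalgebra])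

lemma restrFM_prob: "V \<subseteq> - fut L \<Longrightarrow> prob_space (restrFM ME (k \<omega>) V)"
  unfolding restrFM_def by (rule prob_space_restr_to_subalg[OF pk_subalgebra pk_prob])

lemma restrFM_integral:
  "V \<subseteq> - fut L \<Longrightarrow> f \<in> borel_measurable (FM ME V) \<Longrightarrow>
   (\<integral>x. f x \<partial>restrFM ME (k \<omega>) V) = (\<integral>x. (f x :: real) \<partial>k \<omega>)"
  unfolding restrFM_def by (rule integral_subalgebra2[OF pk_subalgebra])

lemma past_outer_sets: "sets (FM ME (past L \<union> outer L)) \<subseteq> sets (k \<omega>)"
  using FM_mono[OF past_outer_timebox[OF tbL]] pk_sets by auto

text \<open>Condition (d) says that k \<omega> is a point mass on the past and outer
  coordinates: almost surely they agree with those of \<omega>.\<close>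
lemma pk_AE_set:
  assumes B: "B \<in> sets (FM ME (past L \<union> outer L))"
  shows "AE \<sigma> in k \<omega>. (\<sigma> \<in> B \<longleftrightarrow> \<omega> \<in> B)"
proof -
  interpret prob_space "k \<omega>" by (rule pk_prob)
  have Bs: "B \<in> sets (k \<omega>)" using B past_outer_sets by auto
  show ?thesis
  proof (cases "\<omega> \<in> B")
    case True
    then have "prob B = 1" using pk_indicator[OF B] by simp
    then show ?thesis using AE_prob_1 True by auto
  next
    case False
    then have "prob (space (k \<omega>) - B) = 1" using pk_indicator[OF B] prob_compl[OF Bs] by simp
    then have "AE \<sigma> in k \<omega>. \<sigma> \<in> space (k \<omega>) - B" by (rule AE_prob_1)
    then show ?thesis using False by auto
  qed
qed

lemma pk_AE_fun:
  assumes f: "f \<in> borel_measurable (FM ME (past L \<union> outer L))"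
  shows "AE \<sigma> in k \<omega>. f \<sigma> = (f \<omega> :: real)"
proof -
  have "f -` {f \<omega>} \<inter> space (FM ME (past L \<union> outer L)) \<in> sets (FM ME (past L \<union> outer L))"
    by (rule measurable_sets[OF f]) simp
  then show ?thesis using pk_AE_set[of "f -` {f \<omega>}" \<omega>] by auto
qed

lemma pk_integral_const:
  assumes f: "f \<in> borel_measurable (FM ME (past L \<union> outer L))"
  shows "(\<integral>\<sigma>. f \<sigma> \<partial>k \<omega>) = (f \<omega> :: real)"
proof -
  interpret prob_space "k \<omega>" by (rule pk_prob)
  have fm: "f \<in> borel_measurable (k \<omega>)"
    by (rule measurable_FM_into[OF past_outer_sets pk_space f])
  have "(\<integral>\<sigma>. f \<sigma> \<partial>k \<omega>) = (\<integral>\<sigma>. f \<omega> \<partial>k \<omega>)"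
    by (rule integral_cong_AE[OF fm _ pk_AE_fun[OF f]]) simp
  then show ?thesis by (simp add: prob_space)
qed

lemma pk_rect:
  assumes A: "A \<in> sets (k \<omega>)" and B: "B \<in> sets (FM ME (past L \<union> outer L))"
  shows "emeasure (k \<omega>) (A \<inter> B) = (if \<omega> \<in> B then emeasure (k \<omega>) A else 0)"
proof -
  have "B \<in> sets (k \<omega>)" using B past_outer_sets by auto
  then have "emeasure (k \<omega>) (A \<inter> B) = emeasure (k \<omega>) (if \<omega> \<in> B then A else {})"
    using A pk_AE_set[OF B, of \<omega>] by (intro emeasure_eq_AE) auto
  then show ?thesis by auto
qed

text \<open>It is
  checked on rectangles A \<inter> B, A \<in> F_{V \<inter> L}, B \<in> F_{V - L}, where
  k \<omega> (A \<inter> B) = 1_B(\<omega>) k \<omega> (A) by (c) and (d).\<close>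
lemma pk_measurable_kernel:
  assumes V: "V \<subseteq> - fut L"
  shows "(\<lambda>\<omega>. restrFM ME (k \<omega>) V) \<in> measurable (FM ME (past L \<union> (V - L))) (subprob_algebra (FM ME V))"
proof (rule measurable_subprob_algebra_generated[where \<Omega>=UNIV and G="Rect ME (V \<inter> L) (V - L)"])
  have "V = (V \<inter> L) \<union> (V - L)" by auto
  then show "sets (FM ME V) = sigma_sets UNIV (Rect ME (V \<inter> L) (V - L))"
    using Rect_gen[of ME "V \<inter> L" "V - L"] by metis
  show "Int_stable (Rect ME (V \<inter> L) (V - L))" by (rule Rect_Int_stable)
  show "Rect ME (V \<inter> L) (V - L) \<subseteq> Pow UNIV" by auto
  fix a
  show "subprob_space (restrFM ME (k a) V)" using restrFM_prob[OF V] by (rule prob_space_imp_subprob_space)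
  show "sets (restrFM ME (k a) V) = sets (FM ME V)" by (rule restrFM_sets[OF V])
next
  fix X assume "X \<in> Rect ME (V \<inter> L) (V - L)"
  then obtain A B where X: "X = A \<inter> B" and A: "A \<in> sets (FM ME (V \<inter> L))" and B: "B \<in> sets (FM ME (V - L))"
    unfolding Rect_def by auto
  have AV: "A \<in> sets (FM ME V)" using A FM_mono[of "V \<inter> L" V ME] by auto
  have BV: "B \<in> sets (FM ME V)" using B FM_mono[of "V - L" V ME] by auto
  have AL: "A \<in> sets (FM ME L)" using A FM_mono[of "V \<inter> L" L ME] by auto
  have BPO: "B \<in> sets (FM ME (past L \<union> outer L))"
    using B FM_mono[of "V - L" "past L \<union> outer L" ME] compl_fut_Diff[of L] V by auto
  have Ak: "A \<in> sets (k \<omega>)" for \<omega> using AV FM_mono[OF V] pk_sets by auto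
  have eq: "emeasure (restrFM ME (k \<omega>) V) X = ennreal (indicator B \<omega> * measure (k \<omega>) A)" for \<omega>
    using restrFM_emeasure[OF V, of X \<omega>] AV BV pk_rect[OF Ak BPO] pk_emeasure
    by (auto simp: X indicator_def)
  have m1: "(\<lambda>\<omega>. measure (k \<omega>) A) \<in> borel_measurable (FM ME (past L \<union> (V - L)))"
    by (rule measurable_FM_mono[OF _ pk_measurable_past[OF AL]]) auto
  have m2: "indicator B \<in> borel_measurable (FM ME (past L \<union> (V - L)))"
    by (rule measurable_FM_mono[OF _ borel_measurable_indicator[OF B]]) auto
  show "(\<lambda>a. emeasure (restrFM ME (k a) V) X) \<in> borel_measurable (FM ME (past L \<union> (V - L)))"
    unfolding eq using m1 m2 by measurable
next
  have "emeasure (restrFM ME (k a) V) UNIV = 1" for a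
    using prob_space.emeasure_space_1[OF restrFM_prob[OF V]] restrFM_space by simp
  then show "(\<lambda>a. emeasure (restrFM ME (k a) V) UNIV) \<in> borel_measurable (FM ME (past L \<union> (V - L)))" by simp
qed

lemma pk_measurable_integral:
  assumes V: "V \<subseteq> - fut L" and f: "f \<in> borel_measurable (FM ME V)"
  shows "(\<lambda>\<omega>. \<integral>\<sigma>. (f \<sigma> :: real) \<partial>k \<omega>) \<in> borel_measurable (FM ME (past L \<union> (V - L)))"
proof -
  have "(\<lambda>\<omega>. \<integral>\<sigma>. f \<sigma> \<partial>restrFM ME (k \<omega>) V) \<in> borel_measurable (FM ME (past L \<union> (V - L)))"
    by (rule measurable_compose[OF pk_measurable_kernel[OF V] integral_measurable_subprob_algebra[OF f]])
  then show ?thesis using restrFM_integral[OF V f] by simp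
qed

lemma pk_measurable_measure:
  assumes V: "V \<subseteq> - fut L" and A: "A \<in> sets (FM ME V)"
  shows "(\<lambda>\<omega>. measure (k \<omega>) A) \<in> borel_measurable (FM ME (past L \<union> (V - L)))"
  using pk_measurable_integral[OF V borel_measurable_indicator[OF A]] by (simp add: pk_space)

end

lemma pk_eqI:
  assumes k1: "proper_kernel ME L k1" and k2: "proper_kernel ME L k2" and tb: "timebox L"
    and eq: "\<And>\<omega> A. A \<in> sets (FM ME (- fut L)) \<Longrightarrow> measure (k1 \<omega>) A = measure (k2 \<omega>) A"
  shows "k1 = k2"
proof
  fix \<omega>
  show "k1 \<omega> = k2 \<omega>"
  proof (rule measure_eqI)
    show "sets (k1 \<omega>) = sets (k2 \<omega>)" using pk_sets[OF k1 tb] pk_sets[OF k2 tb] by simp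
    fix A assume "A \<in> sets (k1 \<omega>)"
    then have "A \<in> sets (FM ME (- fut L))" using pk_sets[OF k1 tb] by simp
    then show "emeasure (k1 \<omega>) A = emeasure (k2 \<omega>) A"
      using eq pk_emeasure[OF k1 tb] pk_emeasure[OF k2 tb] by simp
  qed
qed

lemma return_proper: "proper_kernel ME {} (\<lambda>\<omega>. return (FM ME UNIV) \<omega>)"
  unfolding proper_kernel_def empty_box
proof (intro conjI ballI allI)
  fix \<omega>
  show "prob_space (return (FM ME UNIV) \<omega>)" by (rule prob_space_return) simp
  show "space (return (FM ME UNIV) \<omega>) = UNIV" by simp
  show "sets (return (FM ME UNIV) \<omega>) = sets (FM ME (- {}))" by simp
next
  fix A assume "A \<in> sets (FM ME (- {}))"
  then show "(\<lambda>\<omega>. measure (return (FM ME UNIV) \<omega>) A) \<in> borel_measurable (FM ME ({} \<union> UNIV))"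
    by (simp add: measure_return borel_measurable_indicator)
next
  fix A assume A: "A \<in> sets (FM ME {})"
  then have "A \<in> sets (FM ME UNIV)" using FM_mono[of "{}" UNIV ME] by auto
  then show "(\<lambda>\<omega>. measure (return (FM ME UNIV) \<omega>) A) \<in> borel_measurable (FM ME {})"
    using A by (simp add: measure_return borel_measurable_indicator)
next
  fix B \<omega> assume "B \<in> sets (FM ME ({} \<union> UNIV))"
  then show "measure (return (FM ME UNIV) \<omega>) B = indicator B \<omega>" by (simp add: measure_return)
qed

lemma timebox_empty: "timebox {}"
  unfolding timebox_def empty_box by simp

lemma proper_kernel_empty:
  fixes k :: "('s::order \<Rightarrow> 'e) \<Rightarrow> ('s \<Rightarrow> 'e) measure"
  assumes k: "proper_kernel ME {} k"
  shows "k = (\<lambda>\<omega>. return (FM ME UNIV) \<omega>)"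
proof (rule pk_eqI[OF k return_proper timebox_empty])
  fix \<omega> A assume "A \<in> sets (FM ME (- fut ({} :: 's set)))"
  then have "A \<in> sets (FM ME (past {} \<union> outer {}))" by (simp add: empty_box)
  then show "measure (k \<omega>) A = measure (return (FM ME UNIV) \<omega>) A"
    using pk_indicator[OF k timebox_empty, of A \<omega>] pk_indicator[OF return_proper[of ME] timebox_empty, of A \<omega>]
    by simp
qed

definition kcomp :: "'e measure \<Rightarrow> ('s::order \<Rightarrow> ('s \<Rightarrow> 'e) \<Rightarrow> ('s \<Rightarrow> 'e) measure) \<Rightarrow>
   (('s \<Rightarrow> 'e) \<Rightarrow> ('s \<Rightarrow> 'e) measure) \<Rightarrow> 's \<Rightarrow> 's set \<Rightarrow> ('s \<Rightarrow> 'e) \<Rightarrow> ('s \<Rightarrow> 'e) measure" where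
  "kcomp ME g k x L \<omega> = bind (k \<omega>) (\<lambda>\<sigma>. restrFM ME (g x \<sigma>) (- fut L))"

context
  fixes ME :: "'e measure" and g :: "'s::order \<Rightarrow> ('s \<Rightarrow> 'e) \<Rightarrow> ('s \<Rightarrow> 'e) measure"
  assumes gk: "\<And>x. proper_kernel ME {x} (g x)"
begin

lemma single_restrFM_sets: "V \<subseteq> - fut {x} \<Longrightarrow> sets (restrFM ME (g x \<sigma>) V) = sets (FM ME V)"
  by (rule restrFM_sets[OF gk timebox_single])

lemma single_restrFM_prob: "V \<subseteq> - fut {x} \<Longrightarrow> prob_space (restrFM ME (g x \<sigma>) V)"
  by (rule restrFM_prob[OF gk timebox_single])

lemma single_kernel_measurable:
  assumes tb: "timebox L" and xm: "x \<in> maxs L"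
  shows "(\<lambda>\<sigma>. restrFM ME (g x \<sigma>) (- fut L))
           \<in> measurable (FM ME (- fut (L - {x}))) (subprob_algebra (FM ME (- fut L)))"
proof -
  have "- fut L \<subseteq> - fut {x}" using fut_single_max[OF tb xm] by auto
  from pk_measurable_kernel[OF gk timebox_single this]
  show ?thesis by (rule measurable_FM_mono[OF single_domain_in_Diff_max[OF tb xm]])
qed

context
  fixes L :: "'s set" and x :: 's and k
  assumes tb: "timebox L" and xm: "x \<in> maxs L" and pk: "proper_kernel ME (L - {x}) k"
begin

lemma compl_fut_single: "- fut L \<subseteq> - fut {x}"
  using fut_single_max[OF tb xm] by auto

lemma tb_Diff: "timebox (L - {x})" by (rule timebox_Diff_max[OF tb xm])

lemma kcomp_kernel_measurable:
  "(\<lambda>\<sigma>. restrFM ME (g x \<sigma>) (- fut L)) \<in> measurable (k \<omega>) (subprob_algebra (FM ME (- fut L)))"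
  using single_kernel_measurable[OF tb xm] pk_sets[OF pk tb_Diff] by (simp cong: measurable_cong_sets)

lemma kcomp_sets: "sets (kcomp ME g k x L \<omega>) = sets (FM ME (- fut L))"
  unfolding kcomp_def
  by (rule sets_bind) (auto simp: single_restrFM_sets[OF compl_fut_single] pk_space[OF pk tb_Diff])

lemma kcomp_space: "space (kcomp ME g k x L \<omega>) = UNIV"
  using kcomp_sets[of \<omega>] by (metis sets_eq_imp_space_eq space_FM)

lemma kcomp_integral:
  fixes h :: "('s \<Rightarrow> 'e) \<Rightarrow> real"
  assumes h: "h \<in> borel_measurable (FM ME (- fut L))" and hb: "\<And>z. \<bar>h z\<bar> \<le> B"
  shows "(\<integral>\<xi>. h \<xi> \<partial>kcomp ME g k x L \<omega>) = (\<integral>\<sigma>. (\<integral>\<xi>. h \<xi> \<partial>g x \<sigma>) \<partial>k \<omega>)"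
proof -
  interpret prob_space "k \<omega>" by (rule pk_prob[OF pk tb_Diff])
  have "(\<integral>\<xi>. h \<xi> \<partial>kcomp ME g k x L \<omega>) = (\<integral>\<sigma>. (\<integral>\<xi>. h \<xi> \<partial>restrFM ME (g x \<sigma>) (- fut L)) \<partial>k \<omega>)"
    unfolding kcomp_def
  proof (rule integral_bind[where K="FM ME (- fut L)" and B=B and B'=1, OF h _ kcomp_kernel_measurable])
    show "finite_measure (k \<omega>)" by unfold_locales
    show "AE z in k \<omega>. emeasure (restrFM ME (g x z) (- fut L)) (space (restrFM ME (g x z) (- fut L))) \<le> ennreal 1"
      using prob_space.emeasure_space_1[OF single_restrFM_prob[OF compl_fut_single]] by simp
  qed (use hb in auto)
  also have "\<dots> = (\<integral>\<sigma>. (\<integral>\<xi>. h \<xi> \<partial>g x \<sigma>) \<partial>k \<omega>)"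
    using restrFM_integral[OF gk timebox_single compl_fut_single h] by simp
  finally show ?thesis .
qed

lemma kcomp_measure:
  assumes A: "A \<in> sets (FM ME (- fut L))"
  shows "measure (kcomp ME g k x L \<omega>) A = (\<integral>\<sigma>. measure (g x \<sigma>) A \<partial>k \<omega>)"
proof -
  have "measure (kcomp ME g k x L \<omega>) A = (\<integral>\<xi>. indicator A \<xi> \<partial>kcomp ME g k x L \<omega>)"
    by (simp add: kcomp_space)
  also have "\<dots> = (\<integral>\<sigma>. (\<integral>\<xi>. indicator A \<xi> \<partial>g x \<sigma>) \<partial>k \<omega>)"
    by (rule kcomp_integral[OF borel_measurable_indicator[OF A], of 1]) (simp add: indicator_def)
  also have "\<dots> = (\<integral>\<sigma>. measure (g x \<sigma>) A \<partial>k \<omega>)"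
    by (simp add: pk_space[OF gk timebox_single])
  finally show ?thesis .
qed

lemma kcomp_prob: "prob_space (kcomp ME g k x L \<omega>)"
proof (rule prob_spaceI)
  have "emeasure (kcomp ME g k x L \<omega>) UNIV = (\<integral>\<^sup>+\<sigma>. emeasure (restrFM ME (g x \<sigma>) (- fut L)) UNIV \<partial>k \<omega>)"
    unfolding kcomp_def by (rule emeasure_bind[OF _ kcomp_kernel_measurable]) (auto simp: pk_space[OF pk tb_Diff])
  also have "\<dots> = (\<integral>\<^sup>+\<sigma>. 1 \<partial>k \<omega>)"
    using prob_space.emeasure_space_1[OF single_restrFM_prob[OF compl_fut_single]]
      restrFM_space[OF gk timebox_single] by (metis (no_types, lifting))
  also have "\<dots> = 1" using prob_space.emeasure_space_1[OF pk_prob[OF pk tb_Diff]] pk_space[OF pk tb_Diff] by simp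
  finally show "emeasure (kcomp ME g k x L \<omega>) (space (kcomp ME g k x L \<omega>)) = 1" by (simp add: kcomp_space)
qed

text \<open>Measurability (b), (c) follows from pk_measurable_integral applied twice, and
  (d) since both kernels fix the past and outer time of L.\<close>
lemma kcomp_proper: "proper_kernel ME L (kcomp ME g k x L)"
  unfolding proper_kernel_def
proof (intro conjI ballI allI)
  fix \<omega>
  show "prob_space (kcomp ME g k x L \<omega>)" by (rule kcomp_prob)
  show "space (kcomp ME g k x L \<omega>) = UNIV" by (rule kcomp_space)
  show "sets (kcomp ME g k x L \<omega>) = sets (FM ME (- fut L))" by (rule kcomp_sets)
next
  fix A assume A: "A \<in> sets (FM ME (- fut L))"
  have "(\<lambda>\<sigma>. measure (g x \<sigma>) A) \<in> borel_measurable (FM ME (past {x} \<union> (- fut L - {x})))"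
    using pk_measurable_measure[OF gk timebox_single compl_fut_single A] .
  from pk_measurable_integral[OF pk tb_Diff single_domain_in_Diff_max[OF tb xm] this]
  show "(\<lambda>\<omega>. measure (kcomp ME g k x L \<omega>) A) \<in> borel_measurable (FM ME (past L \<union> outer L))"
    unfolding kcomp_measure[OF A] by (rule measurable_FM_mono[OF composite_dependence_past_outer[OF tb xm]])
next
  fix A assume A: "A \<in> sets (FM ME L)"
  have "L \<subseteq> - fut {x}" using fut_single_max[OF tb xm] fut_disjoint[of L] by auto
  then have "(\<lambda>\<sigma>. measure (g x \<sigma>) A) \<in> borel_measurable (FM ME (past {x} \<union> (L - {x})))"
    using pk_measurable_measure[OF gk timebox_single _ A] by blast
  from pk_measurable_integral[OF pk tb_Diff single_box_in_Diff_max[OF tb xm] this]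
  have "(\<lambda>\<omega>. \<integral>\<sigma>. measure (g x \<sigma>) A \<partial>k \<omega>) \<in> borel_measurable (FM ME (past L))"
    by (rule measurable_FM_mono[OF composite_dependence_past[OF tb xm]])
  moreover have "A \<in> sets (FM ME (- fut L))" using A FM_mono[of L "- fut L" ME] fut_disjoint[of L] by auto
  ultimately show "(\<lambda>\<omega>. measure (kcomp ME g k x L \<omega>) A) \<in> borel_measurable (FM ME (past L))"
    by (simp add: kcomp_measure)
next
  fix B \<omega> assume B: "B \<in> sets (FM ME (past L \<union> outer L))"
  have B': "B \<in> sets (FM ME (- fut L))" using B FM_mono[OF past_outer_timebox[OF tb]] by auto
  have Bx: "B \<in> sets (FM ME (past {x} \<union> outer {x}))" using B FM_mono[OF past_outer_single_max[OF tb xm]] by auto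
  have BL: "B \<in> sets (FM ME (past (L - {x}) \<union> outer (L - {x})))"
    using B FM_mono[OF past_outer_Diff_max[OF tb xm]] by auto
  have "measure (kcomp ME g k x L \<omega>) B = (\<integral>\<sigma>. indicator B \<sigma> \<partial>k \<omega>)"
    using kcomp_measure[OF B'] pk_indicator[OF gk timebox_single Bx] by simp
  also have "\<dots> = indicator B \<omega>"
    using pk_indicator[OF pk tb_Diff BL] by (simp add: pk_space[OF pk tb_Diff])
  finally show "measure (kcomp ME g k x L \<omega>) B = indicator B \<omega>" .
qed

end

section \<open>Kernels at incomparable sites commute\<close>

abbreviation two_step :: "'s \<Rightarrow> 's set \<Rightarrow> 's \<Rightarrow> 's set \<Rightarrow> ('s \<Rightarrow> 'e) \<Rightarrow> ('s \<Rightarrow> 'e) measure" where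
  "two_step x W y V \<sigma> \<equiv> bind (restrFM ME (g x \<sigma>) W) (\<lambda>\<tau>. restrFM ME (g y \<tau>) V)"

lemma two_step_kernel_measurable:
  assumes V: "V \<subseteq> - fut {y}" and W1: "past {y} \<union> (V - {y}) \<subseteq> W" and W2: "W \<subseteq> - fut {x}"
  shows "(\<lambda>\<tau>. restrFM ME (g y \<tau>) V) \<in> measurable (restrFM ME (g x \<sigma>) W) (subprob_algebra (FM ME V))"
  using measurable_FM_mono[OF W1 pk_measurable_kernel[OF gk timebox_single V]]
    single_restrFM_sets[OF W2] by (simp cong: measurable_cong_sets)

lemma two_step_sets:
  assumes "V \<subseteq> - fut {y}"
  shows "sets (two_step x W y V \<sigma>) = sets (FM ME V)"
  by (rule sets_bind) (auto simp: single_restrFM_sets[OF assms] restrFM_space[OF gk timebox_single])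

text \<open>Inside g x, the probability that g y gives to a rectangle A \<inter> B \<inter> C (A at x,
  B at y, C elsewhere) is a.s. 1_C(\<sigma>) g_y(\<sigma>)(B) 1_A: for incomparable sites g x
  fixes C and everything g y looks at, while g y fixes A and C.\<close>
lemma single_rectangle_AE:
  assumes inc: "incomparable x y" and V: "V \<subseteq> - (fut {x} \<union> fut {y})"
    and A: "A \<in> sets (FM ME (V \<inter> {x}))" and B: "B \<in> sets (FM ME (V \<inter> {y}))"
    and C: "C \<in> sets (FM ME (V - {x, y}))"
  shows "AE \<tau> in g x \<sigma>. emeasure (g y \<tau>) (A \<inter> B \<inter> C)
      = ennreal (indicator C \<sigma> * measure (g y \<sigma>) B) * indicator A \<tau>"
proof -
  note tx = timebox_single[of x] and ty = timebox_single[of y]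
  have py: "past {y} \<subseteq> past {x} \<union> outer {x}"
    using inc unfolding past_def outer_def incomparable_def by (auto dest: less_le_trans order.strict_implies_order)
  have ACy: "A \<inter> C \<in> sets (FM ME (past {y} \<union> outer {y}))"
  proof -
    have "V \<inter> {x} \<subseteq> past {y} \<union> outer {y}" using inc unfolding outer_def incomparable_def by auto
    moreover have "V - {x, y} \<subseteq> past {y} \<union> outer {y}" using compl_fut_Diff[of "{y}"] V by auto
    ultimately show ?thesis using A C FM_mono by blast
  qed
  have Cx: "C \<in> sets (FM ME (past {x} \<union> outer {x}))"
    using C FM_mono[of "V - {x, y}" "past {x} \<union> outer {x}" ME] compl_fut_Diff[of "{x}"] V by auto
  have By: "B \<in> sets (FM ME {y})" using B FM_mono[of "V \<inter> {y}" "{y}" ME] by auto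
  have mB: "(\<lambda>\<tau>. measure (g y \<tau>) B) \<in> borel_measurable (FM ME (past {x} \<union> outer {x}))"
    by (rule measurable_FM_mono[OF py pk_measurable_past[OF gk ty By]])
  have Bs: "B \<in> sets (g y \<tau>)" for \<tau>
    using By FM_mono[of "{y}" "- fut {y}" ME] fut_disjoint[of "{y}"] pk_sets[OF gk ty] by auto
  have e: "emeasure (g y \<tau>) (A \<inter> B \<inter> C) = (if \<tau> \<in> A \<inter> C then ennreal (measure (g y \<tau>) B) else 0)" for \<tau>
    using pk_rect[OF gk ty Bs ACy, of \<tau>] pk_emeasure[OF gk ty] by (simp add: Int_ac)
  have "AE \<tau> in g x \<sigma>. (\<tau> \<in> C \<longleftrightarrow> \<sigma> \<in> C)" by (rule pk_AE_set[OF gk tx Cx])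
  moreover have "AE \<tau> in g x \<sigma>. measure (g y \<tau>) B = measure (g y \<sigma>) B" by (rule pk_AE_fun[OF gk tx mB])
  ultimately show ?thesis by eventually_elim (auto simp: e indicator_def)
qed

lemma two_step_rectangle:
  assumes inc: "incomparable x y" and V: "V \<subseteq> - (fut {x} \<union> fut {y})"
    and W1: "past {y} \<union> (V - {y}) \<subseteq> W" and W2: "W \<subseteq> - fut {x}"
    and A: "A \<in> sets (FM ME (V \<inter> {x}))" and B: "B \<in> sets (FM ME (V \<inter> {y}))"
    and C: "C \<in> sets (FM ME (V - {x, y}))"
  shows "emeasure (two_step x W y V \<sigma>) (A \<inter> B \<inter> C)
     = ennreal (indicator C \<sigma> * measure (g y \<sigma>) B * measure (g x \<sigma>) A)"
proof -
  note tx = timebox_single[of x] and ty = timebox_single[of y]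
  have Vy: "V \<subseteq> - fut {y}" using V by auto
  have R: "A \<inter> B \<inter> C \<in> sets (FM ME V)"
    using A B C FM_mono[of "V \<inter> {x}" V ME] FM_mono[of "V \<inter> {y}" V ME] FM_mono[of "V - {x,y}" V ME] by auto
  have Ax: "A \<in> sets (g x \<sigma>)" using A FM_mono[of "V \<inter> {x}" "- fut {x}" ME] pk_sets[OF gk tx] V by auto
  have mR: "(\<lambda>\<tau>. emeasure (g y \<tau>) (A \<inter> B \<inter> C)) \<in> borel_measurable (FM ME W)"
    using measurable_FM_mono[OF W1 pk_measurable_measure[OF gk ty Vy R]]
    by (simp add: pk_emeasure[OF gk ty])
  have "emeasure (two_step x W y V \<sigma>) (A \<inter> B \<inter> C)
      = (\<integral>\<^sup>+\<tau>. emeasure (restrFM ME (g y \<tau>) V) (A \<inter> B \<inter> C) \<partial>restrFM ME (g x \<sigma>) W)"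
    by (rule emeasure_bind[OF _ two_step_kernel_measurable[OF Vy W1 W2] R]) (simp add: restrFM_space[OF gk tx])
  also have "\<dots> = (\<integral>\<^sup>+\<tau>. emeasure (g y \<tau>) (A \<inter> B \<inter> C) \<partial>g x \<sigma>)"
    using restrFM_emeasure[OF gk ty Vy R] nn_integral_subalgebra2[OF pk_subalgebra[OF gk tx W2] mR]
    unfolding restrFM_def by simp
  also have "\<dots> = (\<integral>\<^sup>+\<tau>. ennreal (indicator C \<sigma> * measure (g y \<sigma>) B) * indicator A \<tau> \<partial>g x \<sigma>)"
    by (rule nn_integral_cong_AE[OF single_rectangle_AE[OF inc V A B C]])
  also have "\<dots> = ennreal (indicator C \<sigma> * measure (g y \<sigma>) B * measure (g x \<sigma>) A)"
    using nn_integral_cmult_indicator[OF Ax] pk_emeasure[OF gk tx]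
    by (simp add: ennreal_mult'' indicator_def)
  finally show ?thesis .
qed

text \<open>Hence the two orders give the same measure (they agree on the generating
  rectangles, by the symmetric product formula).\<close>
lemma two_step_commute:
  assumes inc: "incomparable x y" and V: "V \<subseteq> - (fut {x} \<union> fut {y})"
    and W1: "past {y} \<union> (V - {y}) \<subseteq> W" "W \<subseteq> - fut {x}"
    and W2: "past {x} \<union> (V - {x}) \<subseteq> W'" "W' \<subseteq> - fut {y}"
  shows "two_step x W y V \<sigma> = two_step y W' x V \<sigma>"
proof -
  let ?E = "Rect3 ME (V \<inter> {x}) (V \<inter> {y}) (V - {x, y})"
  have V': "V \<subseteq> - (fut {y} \<union> fut {x})" using V by auto
  have rect: "emeasure (two_step x W y V \<sigma>) X
      = ennreal (indicator C \<sigma> * measure (g y \<sigma>) B * measure (g x \<sigma>) A)"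
    "emeasure (two_step y W' x V \<sigma>) X
      = ennreal (indicator C \<sigma> * measure (g y \<sigma>) B * measure (g x \<sigma>) A)"
    if "X = A \<inter> B \<inter> C" "A \<in> sets (FM ME (V \<inter> {x}))" "B \<in> sets (FM ME (V \<inter> {y}))"
      "C \<in> sets (FM ME (V - {x, y}))" for X A B C
  proof -
    show "emeasure (two_step x W y V \<sigma>) X = ennreal (indicator C \<sigma> * measure (g y \<sigma>) B * measure (g x \<sigma>) A)"
      unfolding that(1) by (rule two_step_rectangle[OF inc V W1 that(2-4)])
    have "C \<in> sets (FM ME (V - {y, x}))" using that(4) by (simp add: insert_commute)
    from two_step_rectangle[OF incomparable_sym[OF inc] V' W2 that(3,2) this]
    have "emeasure (two_step y W' x V \<sigma>) (B \<inter> A \<inter> C)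
        = ennreal (indicator C \<sigma> * measure (g x \<sigma>) A * measure (g y \<sigma>) B)" .
    moreover have "B \<inter> A \<inter> C = X" using that(1) by auto
    ultimately show "emeasure (two_step y W' x V \<sigma>) X
        = ennreal (indicator C \<sigma> * measure (g y \<sigma>) B * measure (g x \<sigma>) A)"
      by (simp add: mult_ac)
  qed
  have gen: "sets (FM ME V) = sigma_sets UNIV ?E"
  proof -
    have "V = (V \<inter> {x}) \<union> (V \<inter> {y}) \<union> (V - {x, y})" by auto
    then show ?thesis using Rect3_gen[of ME "V \<inter> {x}" "V \<inter> {y}" "V - {x, y}"] by metis
  qed
  have UE: "UNIV \<in> ?E" unfolding Rect3_def by (intro CollectI exI[of _ UNIV]) auto
  show ?thesis
  proof (rule measure_eqI_generator_eq[where E="?E" and \<Omega>=UNIV and A="\<lambda>_. UNIV"])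
    show "Int_stable ?E" by (rule Rect3_Int_stable)
    show "?E \<subseteq> Pow UNIV" by auto
    show "\<And>X. X \<in> ?E \<Longrightarrow> emeasure (two_step x W y V \<sigma>) X = emeasure (two_step y W' x V \<sigma>) X"
      unfolding Rect3_def using rect by auto
    show "sets (two_step x W y V \<sigma>) = sigma_sets UNIV ?E"
      using two_step_sets[of V y] V gen by auto
    show "sets (two_step y W' x V \<sigma>) = sigma_sets UNIV ?E"
      using two_step_sets[of V x] V gen by auto
    show "range (\<lambda>_. UNIV) \<subseteq> ?E" using UE by auto
    show "(\<Union>i::nat. UNIV) = UNIV" by auto
    show "emeasure (two_step x W y V \<sigma>) UNIV \<noteq> \<infinity>" for i :: nat
      using rect(1)[of UNIV UNIV UNIV UNIV] by simp
  qed
qed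

lemma two_step_integral:
  fixes h :: "('s \<Rightarrow> 'e) \<Rightarrow> real"
  assumes V: "V \<subseteq> - fut {y}" and W1: "past {y} \<union> (V - {y}) \<subseteq> W" and W2: "W \<subseteq> - fut {x}"
    and h: "h \<in> borel_measurable (FM ME V)" and hb: "\<And>z. \<bar>h z\<bar> \<le> B"
  shows "(\<integral>z. h z \<partial>two_step x W y V \<tau>) = (\<integral>\<rho>. (\<integral>z. h z \<partial>g y \<rho>) \<partial>g x \<tau>)"
proof -
  note tx = timebox_single[of x] and ty = timebox_single[of y]
  interpret prob_space "restrFM ME (g x \<tau>) W" by (rule single_restrFM_prob[OF W2])
  have "(\<integral>z. h z \<partial>two_step x W y V \<tau>) = (\<integral>\<rho>. (\<integral>z. h z \<partial>restrFM ME (g y \<rho>) V) \<partial>restrFM ME (g x \<tau>) W)"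
  proof (rule integral_bind[where K="FM ME V" and B=B and B'=1, OF h _ two_step_kernel_measurable[OF V W1 W2]])
    show "finite_measure (restrFM ME (g x \<tau>) W)" by unfold_locales
    show "AE z in restrFM ME (g x \<tau>) W. emeasure (restrFM ME (g y z) V) (space (restrFM ME (g y z) V)) \<le> ennreal 1"
      using prob_space.emeasure_space_1[OF single_restrFM_prob[OF V]] by simp
  qed (use hb in auto)
  also have "\<dots> = (\<integral>\<rho>. (\<integral>z. h z \<partial>g y \<rho>) \<partial>restrFM ME (g x \<tau>) W)"
    using restrFM_integral[OF gk ty V h] by simp
  also have "\<dots> = (\<integral>\<rho>. (\<integral>z. h z \<partial>g y \<rho>) \<partial>g x \<tau>)"
    by (rule restrFM_integral[OF gk tx W2 measurable_FM_mono[OF W1 pk_measurable_integral[OF gk ty V h]]])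
  finally show ?thesis .
qed

lemma single_integrals_commute:
  fixes h :: "('s \<Rightarrow> 'e) \<Rightarrow> real"
  assumes inc: "incomparable x y" and V: "V \<subseteq> - (fut {x} \<union> fut {y})"
    and h: "h \<in> borel_measurable (FM ME V)" and hb: "\<And>z. \<bar>h z\<bar> \<le> B"
  shows "(\<integral>\<rho>. (\<integral>z. h z \<partial>g y \<rho>) \<partial>g x \<tau>) = (\<integral>\<rho>. (\<integral>z. h z \<partial>g x \<rho>) \<partial>g y \<tau>)"
proof -
  have W1: "past {y} \<union> (V - {y}) \<subseteq> - fut {x}" and W2: "past {x} \<union> (V - {x}) \<subseteq> - fut {y}"
    using inc V unfolding incomparable_def past_def fut_def
    by (auto dest: order.strict_trans order.strict_implies_order)
  have Vx: "V \<subseteq> - fut {x}" and Vy: "V \<subseteq> - fut {y}" using V by auto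
  have "(\<integral>\<rho>. (\<integral>z. h z \<partial>g y \<rho>) \<partial>g x \<tau>) = (\<integral>z. h z \<partial>two_step x (past {y} \<union> (V - {y})) y V \<tau>)"
    by (rule two_step_integral[OF Vy order.refl W1 h hb, symmetric])
  also have "\<dots> = (\<integral>z. h z \<partial>two_step y (past {x} \<union> (V - {x})) x V \<tau>)"
    by (rule arg_cong[OF two_step_commute[OF inc V order.refl W1 order.refl W2]])
  also have "\<dots> = (\<integral>\<rho>. (\<integral>z. h z \<partial>g x \<rho>) \<partial>g y \<tau>)"
    by (rule two_step_integral[OF Vx order.refl W2 h hb])
  finally show ?thesis .
qed

end

section \<open>The recursively constructed specification\<close>

definition some_max :: "'s::order set \<Rightarrow> 's" where
  "some_max L = (SOME x. x \<in> maxs L)"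

primrec gspec_iter :: "'e measure \<Rightarrow> ('s::order \<Rightarrow> ('s \<Rightarrow> 'e) \<Rightarrow> ('s \<Rightarrow> 'e) measure) \<Rightarrow> nat \<Rightarrow>
    's set \<Rightarrow> ('s \<Rightarrow> 'e) \<Rightarrow> ('s \<Rightarrow> 'e) measure" where
  "gspec_iter ME g 0 L = (\<lambda>\<omega>. return (FM ME UNIV) \<omega>)"
| "gspec_iter ME g (Suc n) L = kcomp ME g (gspec_iter ME g n (L - {some_max L})) (some_max L) L"

definition gspec :: "'e measure \<Rightarrow> ('s::order \<Rightarrow> ('s \<Rightarrow> 'e) \<Rightarrow> ('s \<Rightarrow> 'e) measure) \<Rightarrow>
    's set \<Rightarrow> ('s \<Rightarrow> 'e) \<Rightarrow> ('s \<Rightarrow> 'e) measure" where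
  "gspec ME g L = gspec_iter ME g (card L) L"

lemma some_max_maxs: "finite L \<Longrightarrow> L \<noteq> {} \<Longrightarrow> some_max L \<in> maxs L"
  unfolding some_max_def using maxs_nonempty by (metis someI_ex)

lemma gspec_empty: "gspec ME g {} = (\<lambda>\<omega>. return (FM ME UNIV) \<omega>)"
  by (simp add: gspec_def)

lemma gspec_rec:
  assumes "finite L" "L \<noteq> {}"
  shows "gspec ME g L = kcomp ME g (gspec ME g (L - {some_max L})) (some_max L) L"
proof -
  have "some_max L \<in> L" using some_max_maxs[OF assms] maxsD by auto
  then have "card L = Suc (card (L - {some_max L}))"
    using assms by (simp add: card_gt_0_iff)
  then show ?thesis by (simp add: gspec_def)
qed

lemma timebox_induct [consumes 1, case_names empty remove_max]:
  assumes tb: "timebox L"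
    and empty: "P {}"
    and step: "\<And>L. timebox L \<Longrightarrow> L \<noteq> {} \<Longrightarrow> some_max L \<in> maxs L \<Longrightarrow> P (L - {some_max L}) \<Longrightarrow> P L"
  shows "P L"
  using tb
proof (induction "card L" arbitrary: L rule: less_induct)
  case less
  show ?case
  proof (cases "L = {}")
    case True then show ?thesis using empty by simp
  next
    case False
    have fin: "finite L" using less.prems unfolding timebox_def by auto
    have xm: "some_max L \<in> maxs L" by (rule some_max_maxs[OF fin False])
    have "card (L - {some_max L}) < card L" using fin maxsD(1)[OF xm] by (rule card_Diff1_less)
    then have "P (L - {some_max L})" using timebox_Diff_max[OF less.prems xm] by (rule less.hyps)
    then show ?thesis by (rule step[OF less.prems False xm])
  qed
qed

text \<open>This is the POS identity for the
  pair {y} \<subseteq> D, and the heart of the consistency proof.\<close>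
definition absorbs_singles :: "'e measure \<Rightarrow> ('s::order \<Rightarrow> ('s \<Rightarrow> 'e) \<Rightarrow> ('s \<Rightarrow> 'e) measure) \<Rightarrow>
    's set \<Rightarrow> (('s \<Rightarrow> 'e) \<Rightarrow> ('s \<Rightarrow> 'e) measure) \<Rightarrow> bool" where
  "absorbs_singles ME g D k \<longleftrightarrow>
     (\<forall>y\<in>D. \<forall>(h :: ('s \<Rightarrow> 'e) \<Rightarrow> real) B \<omega>.
        h \<in> borel_measurable (FM ME (- (fut {y} \<union> fut D))) \<longrightarrow> (\<forall>z. \<bar>h z\<bar> \<le> B) \<longrightarrow>
        (\<integral>\<sigma>. (\<integral>z. h z \<partial>g y \<sigma>) \<partial>k \<omega>) = (\<integral>z. h z \<partial>k \<omega>))"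

context
  fixes ME :: "'e measure" and g :: "'s::order \<Rightarrow> ('s \<Rightarrow> 'e) \<Rightarrow> ('s \<Rightarrow> 'e) measure"
  assumes gk: "\<And>x. proper_kernel ME {x} (g x)"
begin

lemma gspec_proper: "timebox L \<Longrightarrow> proper_kernel ME L (gspec ME g L)"
proof (induction L rule: timebox_induct)
  case empty then show ?case using return_proper by (simp add: gspec_empty)
next
  case (remove_max L)
  have fin: "finite L" using remove_max(1) unfolding timebox_def by auto
  show ?case unfolding gspec_rec[OF fin remove_max(2)] by (rule kcomp_proper[OF gk remove_max(1,3) remove_max.IH])
qed

lemma gspec_single: "gspec ME g {x} = g x"
proof
  fix \<omega>
  have "some_max {x} = x" using some_max_maxs[of "{x}"] maxsD by auto
  then have "gspec ME g {x} \<omega> = bind (return (FM ME UNIV) \<omega>) (\<lambda>\<sigma>. restrFM ME (g x \<sigma>) (- fut {x}))"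
    using gspec_rec[of "{x}" ME g] by (simp add: kcomp_def gspec_empty)
  also have "\<dots> = restrFM ME (g x \<omega>) (- fut {x})"
    by (rule bind_return[OF measurable_FM_mono[OF _ pk_measurable_kernel[OF gk timebox_single order.refl]]]) auto
  also have "\<dots> = g x \<omega>"
  proof -
    have s: "sets (FM ME (- fut {x})) = sets (g x \<omega>)" using pk_sets[OF gk timebox_single] by simp
    show ?thesis unfolding restrFM_def restr_to_subalg_def s measure_of_of_measure ..
  qed
  finally show "gspec ME g {x} \<omega> = g x \<omega>" .
qed

section \<open>Consistency: gspec is a partially oriented specification\<close>

lemma single_integral_bound:
  "(\<And>z. \<bar>h z\<bar> \<le> B) \<Longrightarrow> \<bar>\<integral>z. (h z :: real) \<partial>g y \<sigma>\<bar> \<le> B"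
  by (rule integral_abs_le_prob[OF pk_prob[OF gk timebox_single]])

context
  fixes D :: "'s set" and x :: 's and k
  assumes tb: "timebox D" and xm: "x \<in> maxs D" and pk: "proper_kernel ME (D - {x}) k"
begin

lemma single_integral_measurable:
  fixes h :: "('s \<Rightarrow> 'e) \<Rightarrow> real"
  assumes h: "h \<in> borel_measurable (FM ME (- (fut {y} \<union> fut D)))"
  shows "(\<lambda>\<sigma>. \<integral>z. h z \<partial>g y \<sigma>) \<in> borel_measurable (FM ME (past {y} \<union> (- (fut {y} \<union> fut D) - {y})))"
  by (rule pk_measurable_integral[OF gk timebox_single _ h]) auto

text \<open>Case y = x: the outer g x does not see x and g x fixes everything else.\<close>
lemma kcomp_absorbs_max:
  fixes h :: "('s \<Rightarrow> 'e) \<Rightarrow> real"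
  assumes h: "h \<in> borel_measurable (FM ME (- (fut {x} \<union> fut D)))" and hb: "\<And>z. \<bar>h z\<bar> \<le> B"
  shows "(\<integral>\<sigma>. (\<integral>z. h z \<partial>g x \<sigma>) \<partial>kcomp ME g k x D \<omega>) = (\<integral>z. h z \<partial>kcomp ME g k x D \<omega>)"
proof -
  define h' where "h' = (\<lambda>\<sigma>. \<integral>z. h z \<partial>g x \<sigma>)"
  have "past {x} \<union> (- (fut {x} \<union> fut D) - {x}) \<subseteq> past {x} \<union> outer {x}"
    using compl_fut_Diff[of "{x}"] by auto
  then have h'po: "h' \<in> borel_measurable (FM ME (past {x} \<union> outer {x}))"
    unfolding h'_def using measurable_FM_mono single_integral_measurable[OF h] by blast
  have h'D: "h' \<in> borel_measurable (FM ME (- fut D))"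
    unfolding h'_def by (rule measurable_FM_mono[OF _ single_integral_measurable[OF h]])
      (use past_single_fut_timebox[OF tb max_in[OF tb xm]] in auto)
  have h'b: "\<And>z. \<bar>h' z\<bar> \<le> B" unfolding h'_def by (rule single_integral_bound[OF hb])
  have hD: "h \<in> borel_measurable (FM ME (- fut D))" by (rule measurable_FM_mono[OF _ h]) auto
  have "(\<integral>\<sigma>. h' \<sigma> \<partial>kcomp ME g k x D \<omega>) = (\<integral>\<tau>. (\<integral>\<sigma>. h' \<sigma> \<partial>g x \<tau>) \<partial>k \<omega>)"
    by (rule kcomp_integral[OF gk tb xm pk h'D h'b])
  also have "\<dots> = (\<integral>\<tau>. h' \<tau> \<partial>k \<omega>)"
    using pk_integral_const[OF gk timebox_single h'po] by simp
  also have "\<dots> = (\<integral>z. h z \<partial>kcomp ME g k x D \<omega>)"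
    unfolding h'_def by (rule kcomp_integral[OF gk tb xm pk hD hb, symmetric])
  finally show ?thesis unfolding h'_def .
qed

text \<open>Case y < x: both h and its g_y-average are functions of coordinates that g x
  keeps fixed, so g x can be dropped and the claim is the one for D - {x}.\<close>
lemma kcomp_absorbs_below:
  fixes h :: "('s \<Rightarrow> 'e) \<Rightarrow> real"
  assumes IH: "absorbs_singles ME g (D - {x}) k" and yD: "y \<in> D" and yx: "y < x"
    and h: "h \<in> borel_measurable (FM ME (- (fut {y} \<union> fut D)))" and hb: "\<And>z. \<bar>h z\<bar> \<le> B"
  shows "(\<integral>\<sigma>. (\<integral>z. h z \<partial>g y \<sigma>) \<partial>kcomp ME g k x D \<omega>) = (\<integral>z. h z \<partial>kcomp ME g k x D \<omega>)"
proof -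
  define h' where "h' = (\<lambda>\<sigma>. \<integral>z. h z \<partial>g y \<sigma>)"
  let ?V = "- (fut {y} \<union> fut D)"
  have xV: "x \<notin> ?V" using yx unfolding fut_def by auto
  have Vpo: "?V \<subseteq> past {x} \<union> outer {x}" using compl_fut_Diff_max[OF tb xm] xV by auto
  have hpo: "h \<in> borel_measurable (FM ME (past {x} \<union> outer {x}))" by (rule measurable_FM_mono[OF Vpo h])
  have "past {y} \<union> (?V - {y}) \<subseteq> past {x} \<union> outer {x}"
    using Vpo yx unfolding past_def by (auto dest: order.strict_trans)
  then have h'po: "h' \<in> borel_measurable (FM ME (past {x} \<union> outer {x}))"
    unfolding h'_def using measurable_FM_mono single_integral_measurable[OF h] by blast
  have h'D: "h' \<in> borel_measurable (FM ME (- fut D))"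
    unfolding h'_def by (rule measurable_FM_mono[OF _ single_integral_measurable[OF h]])
      (use past_single_fut_timebox[OF tb yD] in auto)
  have hD: "h \<in> borel_measurable (FM ME (- fut D))" by (rule measurable_FM_mono[OF _ h]) auto
  have hD': "h \<in> borel_measurable (FM ME (- (fut {y} \<union> fut (D - {x}))))"
    by (rule measurable_FM_mono[OF _ h]) (use fut_Diff_max[OF tb xm] xV in auto)
  have h'b: "\<And>z. \<bar>h' z\<bar> \<le> B" unfolding h'_def by (rule single_integral_bound[OF hb])
  have "(\<integral>\<sigma>. h' \<sigma> \<partial>kcomp ME g k x D \<omega>) = (\<integral>\<tau>. h' \<tau> \<partial>k \<omega>)"
    using kcomp_integral[OF gk tb xm pk h'D h'b]
      pk_integral_const[OF gk timebox_single h'po] by simp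
  also have "\<dots> = (\<integral>\<tau>. h \<tau> \<partial>k \<omega>)"
    using IH yD yx hD' hb unfolding absorbs_singles_def h'_def by auto
  also have "\<dots> = (\<integral>\<sigma>. h \<sigma> \<partial>kcomp ME g k x D \<omega>)"
    using kcomp_integral[OF gk tb xm pk hD hb] pk_integral_const[OF gk timebox_single hpo] by simp
  finally show ?thesis unfolding h'_def .
qed

text \<open>Case y incomparable with x: the kernels at x and y commute, and the claim
  for D - {x} applies to the g x-average of h.\<close>
lemma kcomp_absorbs_incomparable:
  fixes h :: "('s \<Rightarrow> 'e) \<Rightarrow> real"
  assumes IH: "absorbs_singles ME g (D - {x}) k" and yD: "y \<in> D" and inc: "incomparable x y"
    and h: "h \<in> borel_measurable (FM ME (- (fut {y} \<union> fut D)))" and hb: "\<And>z. \<bar>h z\<bar> \<le> B"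
  shows "(\<integral>\<sigma>. (\<integral>z. h z \<partial>g y \<sigma>) \<partial>kcomp ME g k x D \<omega>) = (\<integral>z. h z \<partial>kcomp ME g k x D \<omega>)"
proof -
  let ?V = "- (fut {y} \<union> fut D)"
  define h'' where "h'' = (\<lambda>\<sigma>. \<integral>z. h z \<partial>g x \<sigma>)"
  have Vxy: "?V \<subseteq> - (fut {x} \<union> fut {y})" using fut_single_max[OF tb xm] by auto
  have Vx: "?V \<subseteq> - fut {x}" using Vxy by auto
  have "past {x} \<union> (?V - {x}) \<subseteq> - (fut {y} \<union> fut (D - {x}))"
    using inc past_single_fut_Diff_max[OF tb xm] fut_Diff_max[OF tb xm] unfolding incomparable_def past_def fut_def
    by (auto dest: order.strict_implies_order)
  then have h''D': "h'' \<in> borel_measurable (FM ME (- (fut {y} \<union> fut (D - {x}))))"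
    unfolding h''_def by (rule measurable_FM_mono[OF _ pk_measurable_integral[OF gk timebox_single Vx h]])
  have h'D: "(\<lambda>\<sigma>. \<integral>z. h z \<partial>g y \<sigma>) \<in> borel_measurable (FM ME (- fut D))"
    by (rule measurable_FM_mono[OF _ single_integral_measurable[OF h]])
      (use past_single_fut_timebox[OF tb yD] in auto)
  have h'b: "\<And>z. \<bar>\<integral>z'. h z' \<partial>g y z\<bar> \<le> B" by (rule single_integral_bound[OF hb])
  have h''b: "\<And>z. \<bar>h'' z\<bar> \<le> B" unfolding h''_def by (rule single_integral_bound[OF hb])
  have hD: "h \<in> borel_measurable (FM ME (- fut D))" by (rule measurable_FM_mono[OF _ h]) auto
  have "(\<integral>\<sigma>. (\<integral>z. h z \<partial>g y \<sigma>) \<partial>kcomp ME g k x D \<omega>)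
      = (\<integral>\<tau>. (\<integral>\<sigma>. (\<integral>z. h z \<partial>g y \<sigma>) \<partial>g x \<tau>) \<partial>k \<omega>)"
    by (rule kcomp_integral[OF gk tb xm pk h'D h'b])
  also have "\<dots> = (\<integral>\<tau>. (\<integral>\<sigma>. h'' \<sigma> \<partial>g y \<tau>) \<partial>k \<omega>)"
    unfolding h''_def using single_integrals_commute[OF gk inc Vxy h hb] by simp
  also have "\<dots> = (\<integral>\<tau>. h'' \<tau> \<partial>k \<omega>)"
    using IH yD inc h''D' h''b unfolding absorbs_singles_def incomparable_def by (auto simp: h''_def)
  also have "\<dots> = (\<integral>z. h z \<partial>kcomp ME g k x D \<omega>)"
    unfolding h''_def by (rule kcomp_integral[OF gk tb xm pk hD hb, symmetric])
  finally show ?thesis .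
qed

lemma kcomp_absorbs:
  assumes IH: "absorbs_singles ME g (D - {x}) k"
  shows "absorbs_singles ME g D (kcomp ME g k x D)"
  unfolding absorbs_singles_def
proof (intro ballI allI impI)
  fix y and h :: "('s \<Rightarrow> 'e) \<Rightarrow> real" and B \<omega>
  assume yD: "y \<in> D" and h: "h \<in> borel_measurable (FM ME (- (fut {y} \<union> fut D)))" and hb: "\<forall>z. \<bar>h z\<bar> \<le> B"
  consider "y = x" | "y < x" | "incomparable x y"
    using yD maxsD(2)[OF xm] unfolding incomparable_def by (auto simp: order.order_iff_strict)
  then show "(\<integral>\<sigma>. (\<integral>z. h z \<partial>g y \<sigma>) \<partial>kcomp ME g k x D \<omega>) = (\<integral>z. h z \<partial>kcomp ME g k x D \<omega>)"
  proof cases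
    case 1 then show ?thesis using kcomp_absorbs_max[of h B \<omega>] h hb by simp
  next
    case 2 then show ?thesis using kcomp_absorbs_below[OF IH yD _ h] hb by blast
  next
    case 3 then show ?thesis using kcomp_absorbs_incomparable[OF IH yD _ h] hb by blast
  qed
qed

end

lemma gspec_absorbs: "timebox D \<Longrightarrow> absorbs_singles ME g D (gspec ME g D)"
proof (induction D rule: timebox_induct)
  case empty then show ?case by (simp add: absorbs_singles_def)
next
  case (remove_max D)
  have fin: "finite D" using remove_max(1) unfolding timebox_def by auto
  have pk: "proper_kernel ME (D - {some_max D}) (gspec ME g (D - {some_max D}))"
    by (rule gspec_proper[OF timebox_Diff_max[OF remove_max(1,3)]])
  show ?case unfolding gspec_rec[OF fin remove_max(2)] by (rule kcomp_absorbs[OF remove_max(1,3) pk remove_max.IH])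
qed

text \<open>The POS identity gspec_D gspec_L = gspec_D for L \<subseteq> D: expand gspec_L along
  its maximal elements and absorb each single-site kernel into gspec_D.\<close>
lemma gspec_consistent:
  fixes h :: "('s \<Rightarrow> 'e) \<Rightarrow> real"
  assumes "timebox L" "timebox D" "L \<subseteq> D" "h \<in> borel_measurable (FM ME (- (fut L \<union> fut D)))" "\<And>z. \<bar>h z\<bar> \<le> B"
  shows "(\<integral>\<sigma>. (\<integral>z. h z \<partial>gspec ME g L \<sigma>) \<partial>gspec ME g D \<omega>) = (\<integral>z. h z \<partial>gspec ME g D \<omega>)"
  using assms
proof (induction L arbitrary: h B rule: timebox_induct)
  case empty
  have "h \<in> borel_measurable (FM ME UNIV)" by (rule measurable_FM_mono[OF _ empty.prems(3)]) auto
  then have "(\<integral>z. h z \<partial>gspec ME g {} \<sigma>) = h \<sigma>" for \<sigma>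
    unfolding gspec_empty by (intro integral_return) auto
  then show ?case by simp
next
  case (remove_max L)
  note tbL = remove_max(1) and ym = remove_max(3) and tbD = remove_max.prems(1) and LD = remove_max.prems(2)
    and h = remove_max.prems(3) and hb = remove_max.prems(4)
  let ?y = "some_max L" and ?V = "- (fut L \<union> fut D)"
  have fin: "finite L" using tbL unfolding timebox_def by auto
  have yL: "?y \<in> L" using ym maxsD by auto
  have Vy: "?V \<subseteq> - fut {?y}" using fut_single_max[OF tbL ym] by auto
  define h' where "h' = (\<lambda>\<sigma>. \<integral>z. h z \<partial>g ?y \<sigma>)"
  have h'b: "\<And>z. \<bar>h' z\<bar> \<le> B" unfolding h'_def by (rule single_integral_bound[OF hb])
  have "past {?y} \<union> (?V - {?y}) \<subseteq> - (fut (L - {?y}) \<union> fut D)"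
    using past_single_fut_Diff_max[OF tbL ym] past_single_fut_timebox[OF tbD] yL LD fut_Diff_max[OF tbL ym]
    by blast
  then have h'L': "h' \<in> borel_measurable (FM ME (- (fut (L - {?y}) \<union> fut D)))"
    unfolding h'_def by (rule measurable_FM_mono[OF _ pk_measurable_integral[OF gk timebox_single Vy h]])
  have hL: "h \<in> borel_measurable (FM ME (- fut L))" by (rule measurable_FM_mono[OF _ h]) auto
  have hy: "h \<in> borel_measurable (FM ME (- (fut {?y} \<union> fut D)))"
    by (rule measurable_FM_mono[OF _ h]) (use fut_single_max[OF tbL ym] in auto)
  have "(\<integral>\<sigma>. (\<integral>z. h z \<partial>gspec ME g L \<sigma>) \<partial>gspec ME g D \<omega>)
      = (\<integral>\<sigma>. (\<integral>z. h' z \<partial>gspec ME g (L - {?y}) \<sigma>) \<partial>gspec ME g D \<omega>)"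
    unfolding gspec_rec[OF fin remove_max(2)] h'_def
    using kcomp_integral[OF gk tbL ym gspec_proper[OF timebox_Diff_max[OF tbL ym]] hL hb] by simp
  also have "\<dots> = (\<integral>z. h' z \<partial>gspec ME g D \<omega>)"
    using LD by (intro remove_max.IH[OF tbD _ h'L' h'b]) auto
  also have "\<dots> = (\<integral>z. h z \<partial>gspec ME g D \<omega>)"
    using gspec_absorbs[OF tbD] yL LD hy hb unfolding absorbs_singles_def h'_def by blast
  finally show ?case .
qed

lemma POS_gspec: "POS ME (gspec ME g)"
  unfolding POS_def
proof (intro conjI allI impI)
  fix L :: "'s set" assume "timebox L" then show "proper_kernel ME L (gspec ME g L)" by (rule gspec_proper)
next
  fix L D :: "'s set" and h :: "('s \<Rightarrow> 'e) \<Rightarrow> real" and \<omega>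
  assume "timebox L" "timebox D" "L \<subseteq> D" "h \<in> borel_measurable (FM ME (- (fut L \<union> fut D)))"
    and "bounded (range h)"
  moreover obtain B where "\<forall>z\<in>range h. norm z \<le> B" using \<open>bounded (range h)\<close> unfolding bounded_iff by auto
  ultimately show "(\<integral>\<sigma>. (\<integral>\<xi>. h \<xi> \<partial>gspec ME g L \<sigma>) \<partial>gspec ME g D \<omega>) = (\<integral>\<xi>. h \<xi> \<partial>gspec ME g D \<omega>)"
    by (intro gspec_consistent[of L D h B]) auto
qed

section \<open>Uniqueness\<close>

text \<open>Every POS with single-site kernels g obeys the recursion defining gspec:
  for x maximal in L, consistency gives gamma_L = gamma_L g_x = gamma_L gamma_{L-{x}} g_x,
  and gamma_{L-{x}} g_x only reads the past and outer time of L, which gamma_L fixes.\<close>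
lemma POS_recursion:
  assumes pos: "POS ME \<gamma>" and single: "\<gamma> {x} = g x" and tb: "timebox L" and xm: "x \<in> maxs L"
  shows "\<gamma> L = kcomp ME g (\<gamma> (L - {x})) x L"
proof -
  let ?L' = "L - {x}"
  have tb': "timebox ?L'" by (rule timebox_Diff_max[OF tb xm])
  have pkL: "proper_kernel ME L (\<gamma> L)" and pkL': "proper_kernel ME ?L' (\<gamma> ?L')"
    using pos tb tb' unfolding POS_def by auto
  have cons: "\<And>L D h \<omega>. timebox L \<Longrightarrow> timebox D \<Longrightarrow> L \<subseteq> D \<Longrightarrow>
        h \<in> borel_measurable (FM ME (- (fut L \<union> fut D))) \<Longrightarrow> bounded (range h) \<Longrightarrow>
        (\<integral>\<sigma>. (\<integral>\<xi>. h \<xi> \<partial>\<gamma> L \<sigma>) \<partial>\<gamma> D \<omega>) = (\<integral>\<xi>. (h \<xi> :: real) \<partial>\<gamma> D \<omega>)"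
    using pos unfolding POS_def by blast
  have xL: "x \<in> L" by (rule max_in[OF tb xm])
  have futx: "- fut L \<subseteq> - fut {x}" using fut_single_max[OF tb xm] by auto
  show ?thesis
  proof (rule pk_eqI[OF pkL kcomp_proper[OF gk tb xm pkL'] tb])
    fix \<omega> A assume A: "A \<in> sets (FM ME (- fut L))"
    define h where "h = (indicator A :: ('s \<Rightarrow> 'e) \<Rightarrow> real)"
    define h1 where "h1 = (\<lambda>\<sigma>. \<integral>\<xi>. h \<xi> \<partial>g x \<sigma>)"
    define h2 where "h2 = (\<lambda>\<sigma>. \<integral>\<xi>. h1 \<xi> \<partial>\<gamma> ?L' \<sigma>)"
    have hm: "h \<in> borel_measurable (FM ME (- fut L))" unfolding h_def by (rule borel_measurable_indicator[OF A])
    have hb: "\<And>z. \<bar>h z\<bar> \<le> 1" unfolding h_def by (simp add: indicator_def)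
    have h1b: "\<And>z. \<bar>h1 z\<bar> \<le> 1" unfolding h1_def by (rule integral_abs_le_prob[OF pk_prob[OF gk timebox_single] hb])
    have bnd: "bounded (range h)" "bounded (range h1)" using hb h1b unfolding bounded_iff by auto
    have h1m: "h1 \<in> borel_measurable (FM ME (past {x} \<union> (- fut L - {x})))"
      unfolding h1_def by (rule pk_measurable_integral[OF gk timebox_single futx hm])
    have h1m': "h1 \<in> borel_measurable (FM ME (- (fut ?L' \<union> fut L)))"
      using single_domain_in_Diff_max[OF tb xm] past_single_fut_timebox[OF tb xL]
      by (intro measurable_FM_mono[OF _ h1m]) auto
    have h2po: "h2 \<in> borel_measurable (FM ME (past L \<union> outer L))"
      unfolding h2_def
      by (rule measurable_FM_mono[OF composite_dependence_past_outer[OF tb xm]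
            pk_measurable_integral[OF pkL' tb' single_domain_in_Diff_max[OF tb xm] h1m]])
    have "measure (\<gamma> L \<omega>) A = (\<integral>\<xi>. h \<xi> \<partial>\<gamma> L \<omega>)"
      unfolding h_def using pk_space[OF pkL tb] by simp
    also have "\<dots> = (\<integral>\<sigma>. h1 \<sigma> \<partial>\<gamma> L \<omega>)"
      using cons[OF timebox_single tb _ _ bnd(1), of x \<omega>] xL hm fut_single_max[OF tb xm]
      unfolding h1_def single by (simp add: Un_absorb1)
    also have "\<dots> = (\<integral>\<sigma>. h2 \<sigma> \<partial>\<gamma> L \<omega>)"
      using cons[OF tb' tb _ h1m' bnd(2)] unfolding h2_def by auto
    also have "\<dots> = h2 \<omega>" by (rule pk_integral_const[OF pkL tb h2po])
    also have "\<dots> = (\<integral>\<xi>. h \<xi> \<partial>kcomp ME g (\<gamma> ?L') x L \<omega>)"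
      unfolding h2_def h1_def by (rule kcomp_integral[OF gk tb xm pkL' hm hb, symmetric])
    also have "\<dots> = measure (kcomp ME g (\<gamma> ?L') x L \<omega>) A"
      unfolding h_def using kcomp_space[OF gk tb xm pkL'] by simp
    finally show "measure (\<gamma> L \<omega>) A = measure (kcomp ME g (\<gamma> ?L') x L \<omega>) A" .
  qed
qed

lemma POS_unique:
  assumes pos: "POS ME \<gamma>" and single: "\<And>x. \<gamma> {x} = g x"
  shows "timebox L \<Longrightarrow> \<gamma> L = gspec ME g L"
proof (induction L rule: timebox_induct)
  case empty
  have "proper_kernel ME {} (\<gamma> {})" using pos timebox_empty unfolding POS_def by auto
  then show ?case using proper_kernel_empty gspec_empty by metis
next
  case (remove_max L)
  have fin: "finite L" using remove_max(1) unfolding timebox_def by auto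
  show ?case
    unfolding gspec_rec[OF fin remove_max(2)]
    using POS_recursion[OF pos single remove_max(1,3)] remove_max.IH by simp
qed

end

section \<open>Consistent measures\<close>

lemma space_mu: "space ME = UNIV \<Longrightarrow> sets \<mu> = sets (OmegaM ME) \<Longrightarrow> space \<mu> = UNIV"
  using sets_eq_imp_space_eq[of \<mu> "OmegaM ME"] by (simp add: OmegaM_def space_PiM)

lemma FM_sets_mu:
  assumes "space ME = UNIV" "sets \<mu> = sets (OmegaM ME)"
  shows "sets (FM ME U) \<subseteq> sets \<mu>"
  using sets_FM_OmegaM[OF assms(1)] assms(2) by auto

context
  fixes ME :: "'e measure" and \<mu> :: "('s::order \<Rightarrow> 'e) measure" and L :: "'s set" and k
  assumes spME: "space ME = UNIV" and mu: "prob_space \<mu>" and smu: "sets \<mu> = sets (OmegaM ME)"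
    and pk: "proper_kernel ME L k" and tb: "timebox L"
begin

lemma mu_subalgebra: "subalgebra \<mu> (FM ME (- fut L))"
  unfolding subalgebra_def using FM_sets_mu[OF spME smu] space_mu[OF spME smu] by auto

lemma mu_kernel_measurable:
  "(\<lambda>\<sigma>. restrFM ME (k \<sigma>) (- fut L)) \<in> measurable \<mu> (subprob_algebra (FM ME (- fut L)))"
  by (rule measurable_FM_into[OF FM_sets_mu[OF spME smu] space_mu[OF spME smu] pk_measurable_kernel[OF pk tb order.refl]])

lemma consistent_bind:
  assumes con: "consistent_on ME \<mu> L k"
  shows "bind \<mu> (\<lambda>\<sigma>. restrFM ME (k \<sigma>) (- fut L)) = restr_to_subalg \<mu> (FM ME (- fut L))"
proof (rule measure_eqI)
  interpret prob_space \<mu> by (rule mu)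
  have s1: "sets (bind \<mu> (\<lambda>\<sigma>. restrFM ME (k \<sigma>) (- fut L))) = sets (FM ME (- fut L))"
    by (rule sets_bind) (auto simp: restrFM_sets[OF pk tb] space_mu[OF spME smu])
  then show "sets (bind \<mu> (\<lambda>\<sigma>. restrFM ME (k \<sigma>) (- fut L))) = sets (restr_to_subalg \<mu> (FM ME (- fut L)))"
    using sets_restr_to_subalg[OF mu_subalgebra] by simp
  fix A assume "A \<in> sets (bind \<mu> (\<lambda>\<sigma>. restrFM ME (k \<sigma>) (- fut L)))"
  then have A: "A \<in> sets (FM ME (- fut L))" using s1 by simp
  have intA: "integrable \<mu> (\<lambda>\<sigma>. measure (k \<sigma>) A)"
    by (rule integrable_const_bound[where B=1])
      (auto simp: prob_space.prob_le_1[OF pk_prob[OF pk tb]]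
        intro: measurable_FM_into[OF FM_sets_mu[OF spME smu] space_mu[OF spME smu] pk_measurable_past_outer[OF pk tb A]])
  have "emeasure (bind \<mu> (\<lambda>\<sigma>. restrFM ME (k \<sigma>) (- fut L))) A
      = (\<integral>\<^sup>+\<sigma>. emeasure (restrFM ME (k \<sigma>) (- fut L)) A \<partial>\<mu>)"
    by (rule emeasure_bind[OF _ mu_kernel_measurable A]) (simp add: space_mu[OF spME smu])
  also have "\<dots> = (\<integral>\<^sup>+\<sigma>. ennreal (measure (k \<sigma>) A) \<partial>\<mu>)"
    using restrFM_emeasure[OF pk tb order.refl A] pk_emeasure[OF pk tb] by simp
  also have "\<dots> = ennreal (measure \<mu> A)"
    using nn_integral_eq_integral[OF intA] con A unfolding consistent_on_def by simp
  also have "\<dots> = emeasure (restr_to_subalg \<mu> (FM ME (- fut L))) A"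
    using emeasure_restr_to_subalg[OF mu_subalgebra A] by (simp add: emeasure_eq_measure)
  finally show "emeasure (bind \<mu> (\<lambda>\<sigma>. restrFM ME (k \<sigma>) (- fut L))) A
      = emeasure (restr_to_subalg \<mu> (FM ME (- fut L))) A" .
qed

lemma consistent_integral:
  fixes h :: "('s \<Rightarrow> 'e) \<Rightarrow> real"
  assumes con: "consistent_on ME \<mu> L k"
    and h: "h \<in> borel_measurable (FM ME (- fut L))" and hb: "\<And>z. \<bar>h z\<bar> \<le> B"
  shows "(\<integral>\<sigma>. (\<integral>z. h z \<partial>k \<sigma>) \<partial>\<mu>) = (\<integral>z. h z \<partial>\<mu>)"
proof -
  interpret prob_space \<mu> by (rule mu)
  have "(\<integral>\<sigma>. (\<integral>z. h z \<partial>k \<sigma>) \<partial>\<mu>) = (\<integral>\<sigma>. (\<integral>z. h z \<partial>restrFM ME (k \<sigma>) (- fut L)) \<partial>\<mu>)"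
    using restrFM_integral[OF pk tb order.refl h] by simp
  also have "\<dots> = (\<integral>z. h z \<partial>bind \<mu> (\<lambda>\<sigma>. restrFM ME (k \<sigma>) (- fut L)))"
  proof (rule integral_bind[where K="FM ME (- fut L)" and B=B and B'=1, OF h _ mu_kernel_measurable, symmetric])
    show "finite_measure \<mu>" by unfold_locales
    show "AE z in \<mu>. emeasure (restrFM ME (k z) (- fut L)) (space (restrFM ME (k z) (- fut L))) \<le> ennreal 1"
      using prob_space.emeasure_space_1[OF restrFM_prob[OF pk tb order.refl]] by simp
  qed (use hb in auto)
  also have "\<dots> = (\<integral>z. h z \<partial>\<mu>)"
    unfolding consistent_bind[OF con] by (rule integral_subalgebra2[OF mu_subalgebra h])
  finally show ?thesis .
qed

end

context
  fixes ME :: "'e measure" and g :: "'s::order \<Rightarrow> ('s \<Rightarrow> 'e) \<Rightarrow> ('s \<Rightarrow> 'e) measure"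
  assumes gk: "\<And>x. proper_kernel ME {x} (g x)" and spME: "space ME = UNIV"
begin

text \<open>Consistency is inherited by the composite kernel: \<mu> k g_x = \<mu> g_x = \<mu>.\<close>
lemma kcomp_consistent:
  assumes mu: "prob_space \<mu>" and smu: "sets \<mu> = sets (OmegaM ME)"
    and tb: "timebox L" and xm: "x \<in> maxs L" and pk: "proper_kernel ME (L - {x}) k"
    and con: "consistent_on ME \<mu> (L - {x}) k" and conx: "consistent_on ME \<mu> {x} (g x)"
  shows "consistent_on ME \<mu> L (kcomp ME g k x L)"
  unfolding consistent_on_def
proof
  fix A assume A: "A \<in> sets (FM ME (- fut L))"
  have futx: "- fut L \<subseteq> - fut {x}" using fut_single_max[OF tb xm] by auto
  define f where "f = (\<lambda>\<tau>. measure (g x \<tau>) A)"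
  have fm: "f \<in> borel_measurable (FM ME (- fut (L - {x})))"
    unfolding f_def
    by (rule measurable_FM_mono[OF single_domain_in_Diff_max[OF tb xm] pk_measurable_measure[OF gk timebox_single futx A]])
  have fb: "\<And>z. \<bar>f z\<bar> \<le> 1" unfolding f_def using prob_space.prob_le_1[OF pk_prob[OF gk timebox_single]] by simp
  have "(\<integral>\<sigma>. measure (kcomp ME g k x L \<sigma>) A \<partial>\<mu>) = (\<integral>\<sigma>. (\<integral>\<tau>. f \<tau> \<partial>k \<sigma>) \<partial>\<mu>)"
    unfolding f_def kcomp_measure[OF gk tb xm pk A] ..
  also have "\<dots> = (\<integral>\<tau>. f \<tau> \<partial>\<mu>)"
    by (rule consistent_integral[OF spME mu smu pk timebox_Diff_max[OF tb xm] con fm fb])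
  also have "\<dots> = measure \<mu> A"
    using conx A FM_mono[OF futx] unfolding consistent_on_def f_def by auto
  finally show "(\<integral>\<sigma>. measure (kcomp ME g k x L \<sigma>) A \<partial>\<mu>) = measure \<mu> A" .
qed

lemma gspec_consistent_measure:
  assumes mu: "prob_space \<mu>" and smu: "sets \<mu> = sets (OmegaM ME)"
    and conx: "\<And>x. consistent_on ME \<mu> {x} (g x)"
  shows "timebox L \<Longrightarrow> consistent_on ME \<mu> L (gspec ME g L)"
proof (induction L rule: timebox_induct)
  case empty
  interpret prob_space \<mu> by (rule mu)
  show ?case unfolding consistent_on_def gspec_empty
  proof
    fix A assume A: "A \<in> sets (FM ME (- fut ({} :: 's set)))"
    then have "A \<in> sets \<mu>" using FM_sets_mu[OF spME smu] by auto
    then show "(\<integral>\<sigma>. measure (return (FM ME UNIV) \<sigma>) A \<partial>\<mu>) = measure \<mu> A"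
      using A by (simp add: measure_return empty_box)
  qed
next
  case (remove_max L)
  have fin: "finite L" using remove_max(1) unfolding timebox_def by auto
  show ?case
    unfolding gspec_rec[OF fin remove_max(2)]
    by (rule kcomp_consistent[OF mu smu remove_max(1,3) gspec_proper[OF gk timebox_Diff_max[OF remove_max(1,3)]]
          remove_max.IH conx])
qed

lemma Gibbs_gspec:
  "Gibbs ME (gspec ME g) =
     {\<mu>. prob_space \<mu> \<and> sets \<mu> = sets (OmegaM ME) \<and> (\<forall>x. consistent_on ME \<mu> {x} (g x))}"
  unfolding Gibbs_def
  using timebox_single gspec_single[OF gk] gspec_consistent_measure by metis

end

theorem mainTheorem3:
  fixes ME :: "'e::countable measure"
    and g :: "'s::{order,countable} \<Rightarrow> ('s \<Rightarrow> 'e) \<Rightarrow> ('s \<Rightarrow> 'e) measure"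
  assumes "standing TYPE('s)"
    and "space ME = UNIV"
    and "\<forall>x. proper_kernel ME {x} (g x)"
  shows "\<exists>\<gamma>. POS ME \<gamma> \<and> (\<forall>x. \<gamma> {x} = g x) \<and>
           (\<forall>\<gamma>'. POS ME \<gamma>' \<and> (\<forall>x. \<gamma>' {x} = g x) \<longrightarrow> (\<forall>L. timebox L \<longrightarrow> \<gamma>' L = \<gamma> L)) \<and>
           Gibbs ME \<gamma> = {\<mu>. prob_space \<mu> \<and> sets \<mu> = sets (OmegaM ME) \<and>
                            (\<forall>x. consistent_on ME \<mu> {x} (g x))}"
proof (intro exI[of _ "gspec ME g"] conjI allI impI)
  have gk: "\<And>x. proper_kernel ME {x} (g x)" using assms(3) by auto
  show "POS ME (gspec ME g)" by (rule POS_gspec[OF gk])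
  show "\<And>x. gspec ME g {x} = g x" by (rule gspec_single[OF gk])
  show "\<And>\<gamma>' L. POS ME \<gamma>' \<and> (\<forall>x. \<gamma>' {x} = g x) \<Longrightarrow> timebox L \<Longrightarrow> \<gamma>' L = gspec ME g L"
    using POS_unique[OF gk] by blast
  show "Gibbs ME (gspec ME g) =
      {\<mu>. prob_space \<mu> \<and> sets \<mu> = sets (OmegaM ME) \<and> (\<forall>x. consistent_on ME \<mu> {x} (g x))}"
    by (rule Gibbs_gspec[OF gk assms(2)])
qed

end
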